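(* Let $\Omega:\mathbb{Z}[VB_n]\to\mathbb{Z}[VP_n]\otimes\mathbb{Z}[S_n]$ be the $\mathbb{Z}$-linear map defined on group elements by $\Omega(v)=v\,\big(s(\nu(v))\big)^{-1}\otimes\nu(v)$; it is an isomorphism of $\mathbb{Z}$-algebras, where $\mathbb{Z}[VP_n]\otimes\mathbb{Z}[S_n]$ carries the algebra structure of $\mathbb{Z}[VP_n\rtimes S_n]$. Let $J$ be the two-sided ideal of $\mathbb{Z}[VB_n]$ generated by $\{\sigma_i-\rho_i \mid i=1,\dots,n-1\}$. Then for every integer $d\geq 1$, $\Omega$ maps $J^d$ isomorphically onto $I^d(VP_n)\otimes\mathbb{Z}[S_n]$.
   Context: The virtual braid group $VB_n$ is the group with generators $\sigma_i,\rho_i$ ($i=1,\dots,n-1$) and defining relations: $\sigma_i\sigma_{i+1}\sigma_i=\sigma_{i+1}\sigma_i\sigma_{i+1}$ ($1\le i\le n-2$); $\sigma_i\sigma_j=\sigma_j\sigma_i$ ($|i-j|\geq 2$); $\rho_i\rho_{i+1}\rho_i=\rho_{i+1}\rho_i\rho_{i+1}$ ($1\le i\le n-2$); $\rho_i\rho_j=\rho_j\rho_i$ ($|i-j|\geq 2$); $\rho_i^2=1$; $\sigma_i\rho_j=\rho_j\sigma_i$ ($|i-j|\geq2$); $\rho_i\rho_{i+1}\sigma_i=\sigma_{i+1}\rho_i\rho_{i+1}$ ($1\le i\le n-2$). $\nu:VB_n\to S_n$ is the homomorphism $\nu(\sigma_i)=\nu(\rho_i)=(i\ i{+}1)$, $VP_n=\ker\nu$,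 and $s:S_n\to VB_n$ is the homomorphic section $s((i\ i{+}1))=\rho_i$, so that $VB_n\cong VP_n\rtimes S_n$ via $v\mapsto(v\,(s(\nu(v)))^{-1},\nu(v))$. $I(VP_n)$ denotes the augmentation ideal of $\mathbb{Z}[VP_n]$ (the two-sided ideal generated by $\{g-1\mid g\in VP_n\}$), and $I^d(VP_n)$, $J^d$ denote $d$-th powers of ideals. *)

theory Defs
  imports "HOL-Algebra.Sym_Groups" "HOL-Algebra.Ideal_Product" "HOL-Combinatorics.Transposition"
begin

definition group_ring :: "('a, 'b) monoid_scheme \<Rightarrow> ('a \<Rightarrow> int) ring" where
  "group_ring G =
    \<lparr> carrier = {f. (\<forall>x. x \<notin> carrier G \<longrightarrow> f x = 0) \<and> finite {x. f x \<noteq> 0}},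
      mult = (\<lambda>f g x. if x \<in> carrier G
                        then (\<Sum>y\<in>{y. f y \<noteq> 0}. f y * g (inv\<^bsub>G\<^esub> y \<otimes>\<^bsub>G\<^esub> x))
                        else 0),
      one = (\<lambda>x. if x = \<one>\<^bsub>G\<^esub> then 1 else 0),
      zero = (\<lambda>x. 0),
      add = (\<lambda>f g x. f x + g x) \<rparr>"

definition delta :: "'a \<Rightarrow> 'a \<Rightarrow> int" where
  "delta g = (\<lambda>x. if x = g then 1 else 0)"

definition aug_ideal :: "('a, 'b) monoid_scheme \<Rightarrow> ('a \<Rightarrow> int) set" where
  "aug_ideal G = genideal (group_ring G)
      {(\<lambda>x. delta g x - delta \<one>\<^bsub>G\<^esub> x) | g. g \<in> carrier G}"

primrec ideal_pow :: "('a, 'b) ring_scheme \<Rightarrow> 'a set \<Rightarrow> nat \<Rightarrow> 'a set" where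
  "ideal_pow R I 0 = carrier R"
| "ideal_pow R I (Suc d) = ideal_prod R I (ideal_pow R I d)"

datatype vgen = Sg nat | Rh nat

type_synonym vletter = "vgen \<times> bool"  (* True = inverse letter *)
type_synonym vword = "vletter list"

fun gidx :: "vgen \<Rightarrow> nat" where
  "gidx (Sg i) = i" | "gidx (Rh i) = i"

definition valid_letter :: "nat \<Rightarrow> vletter \<Rightarrow> bool" where
  "valid_letter n l \<longleftrightarrow> 1 \<le> gidx (fst l) \<and> gidx (fst l) < n"

definition vb_words :: "nat \<Rightarrow> vword set" where
  "vb_words n = {w. \<forall>l\<in>set w. valid_letter n l}"

definition sg :: "nat \<Rightarrow> vword" where "sg i = [(Sg i, False)]"
definition rh :: "nat \<Rightarrow> vword" where "rh i = [(Rh i, False)]"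

definition flip :: "vletter \<Rightarrow> vletter" where "flip l = (fst l, \<not> snd l)"

inductive vb_eq :: "nat \<Rightarrow> vword \<Rightarrow> vword \<Rightarrow> bool" for n where
  refl: "w \<in> vb_words n \<Longrightarrow> vb_eq n w w"
| sym: "vb_eq n u v \<Longrightarrow> vb_eq n v u"
| trans: "vb_eq n u v \<Longrightarrow> vb_eq n v w \<Longrightarrow> vb_eq n u w"
| cong: "vb_eq n u v \<Longrightarrow> a \<in> vb_words n \<Longrightarrow> b \<in> vb_words n \<Longrightarrow> vb_eq n (a @ u @ b) (a @ v @ b)"
| cancel: "valid_letter n l \<Longrightarrow> vb_eq n [l, flip l] []"
| ss_braid: "1 \<le> i \<Longrightarrow> i + 2 \<le> n \<Longrightarrow>
     vb_eq n (sg i @ sg (i+1) @ sg i) (sg (i+1) @ sg i @ sg (i+1))"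
| ss_comm: "1 \<le> i \<Longrightarrow> i < n \<Longrightarrow> 1 \<le> j \<Longrightarrow> j < n \<Longrightarrow> i + 2 \<le> j \<Longrightarrow>
     vb_eq n (sg i @ sg j) (sg j @ sg i)"
| rr_braid: "1 \<le> i \<Longrightarrow> i + 2 \<le> n \<Longrightarrow>
     vb_eq n (rh i @ rh (i+1) @ rh i) (rh (i+1) @ rh i @ rh (i+1))"
| rr_comm: "1 \<le> i \<Longrightarrow> i < n \<Longrightarrow> 1 \<le> j \<Longrightarrow> j < n \<Longrightarrow> i + 2 \<le> j \<Longrightarrow>
     vb_eq n (rh i @ rh j) (rh j @ rh i)"
| rr_inv: "1 \<le> i \<Longrightarrow> i < n \<Longrightarrow> vb_eq n (rh i @ rh i) []"
| sr_comm1: "1 \<le> i \<Longrightarrow> i < n \<Longrightarrow> 1 \<le> j \<Longrightarrow> j < n \<Longrightarrow> i + 2 \<le> j \<Longrightarrow>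
     vb_eq n (sg i @ rh j) (rh j @ sg i)"
| sr_comm2: "1 \<le> i \<Longrightarrow> i < n \<Longrightarrow> 1 \<le> j \<Longrightarrow> j < n \<Longrightarrow> j + 2 \<le> i \<Longrightarrow>
     vb_eq n (sg i @ rh j) (rh j @ sg i)"
| mixed: "1 \<le> i \<Longrightarrow> i + 2 \<le> n \<Longrightarrow>
     vb_eq n (rh i @ rh (i+1) @ sg i) (sg (i+1) @ rh i @ rh (i+1))"

definition vb_class :: "nat \<Rightarrow> vword \<Rightarrow> vword set" where
  "vb_class n w = {v. vb_eq n w v}"

definition vb_rep :: "vword set \<Rightarrow> vword" where
  "vb_rep X = (SOME w. w \<in> X)"

definition VB :: "nat \<Rightarrow> vword set monoid" where
  "VB n = \<lparr> carrier = vb_class n ` vb_words n,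
            mult = (\<lambda>X Y. vb_class n (vb_rep X @ vb_rep Y)),
            one = vb_class n [] \<rparr>"

definition sigma :: "nat \<Rightarrow> nat \<Rightarrow> vword set" where "sigma n i = vb_class n (sg i)"
definition rho :: "nat \<Rightarrow> nat \<Rightarrow> vword set" where "rho n i = vb_class n (rh i)"

definition nu_letter :: "vletter \<Rightarrow> nat \<Rightarrow> nat" where
  "nu_letter l = transpose (gidx (fst l)) (gidx (fst l) + 1)"

definition nu_word :: "vword \<Rightarrow> nat \<Rightarrow> nat" where
  "nu_word w = foldr (\<lambda>l f. nu_letter l \<circ> f) w id"

definition nu :: "vword set \<Rightarrow> nat \<Rightarrow> nat" where
  "nu X = nu_word (vb_rep X)"

definition VP_set :: "nat \<Rightarrow> vword set set" where
  "VP_set n = {X \<in> carrier (VB n). nu X = id}"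

definition VP :: "nat \<Rightarrow> vword set monoid" where
  "VP n = (VB n)\<lparr> carrier := VP_set n \<rparr>"

text \<open>The section s : S_n \<rightarrow> VB_n with s((i i+1)) = rho_i: s(pi) is the class of any
  word in the rho-generators whose image under nu is pi (well defined since the rho_i
  satisfy the Coxeter relations of S_n).\<close>
definition s_sec :: "nat \<Rightarrow> (nat \<Rightarrow> nat) \<Rightarrow> vword set" where
  "s_sec n p = vb_class n (SOME w. w \<in> vb_words n \<and> (\<forall>l\<in>set w. l = (Rh (gidx (fst l)), False))
                                 \<and> nu_word w = p)"

text \<open>Z[VP_n] \<otimes> Z[S_n] is identified (as a Z-module) with Z[VP_n \<times> S_n]: finitely
  supported integer functions on VP_n \<times> S_n; a \<otimes> b corresponds to (p,q) \<mapsto> a p * b q.\<close>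
definition tensor_carrier :: "nat \<Rightarrow> (vword set \<times> (nat \<Rightarrow> nat) \<Rightarrow> int) set" where
  "tensor_carrier n = {f. (\<forall>x. x \<notin> VP_set n \<times> carrier (sym_group n) \<longrightarrow> f x = 0)
                          \<and> finite {x. f x \<noteq> 0}}"

definition tensor :: "('a \<Rightarrow> int) \<Rightarrow> ('b \<Rightarrow> int) \<Rightarrow> ('a \<times> 'b \<Rightarrow> int)" where
  "tensor a b = (\<lambda>(x, y). a x * b y)"

inductive_set tensor_span :: "('a \<Rightarrow> int) set \<Rightarrow> ('b \<Rightarrow> int) set \<Rightarrow> ('a \<times> 'b \<Rightarrow> int) set"
  for A B where
  zero: "(\<lambda>x. 0) \<in> tensor_span A B"
| elem: "a \<in> A \<Longrightarrow> b \<in> B \<Longrightarrow> tensor a b \<in> tensor_span A B"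
| add: "f \<in> tensor_span A B \<Longrightarrow> g \<in> tensor_span A B \<Longrightarrow> (\<lambda>x. f x + g x) \<in> tensor_span A B"
| neg: "f \<in> tensor_span A B \<Longrightarrow> (\<lambda>x. - f x) \<in> tensor_span A B"

definition phi :: "nat \<Rightarrow> vword set \<Rightarrow> vword set \<times> (nat \<Rightarrow> nat)" where
  "phi n v = (v \<otimes>\<^bsub>VB n\<^esub> inv\<^bsub>VB n\<^esub> (s_sec n (nu v)), nu v)"

definition Omega :: "nat \<Rightarrow> (vword set \<Rightarrow> int) \<Rightarrow> (vword set \<times> (nat \<Rightarrow> nat) \<Rightarrow> int)" where
  "Omega n f = (\<lambda>x. \<Sum>v\<in>{v \<in> carrier (VB n). f v \<noteq> 0 \<and> phi n v = x}. f v)"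

definition J_ideal :: "nat \<Rightarrow> (vword set \<Rightarrow> int) set" where
  "J_ideal n = genideal (group_ring (VB n))
      {(\<lambda>x. delta (sigma n i) x - delta (rho n i) x) | i. 1 \<le> i \<and> i < n}"

end

theory Submission
  imports Defs "HOL-Algebra.QuotRing"
begin

text \<open>Write \<open>K = VP_n\<close> for the kernel of \<open>\<nu>\<close>. An element \<open>f\<close> of \<open>\<int>[VB_n]\<close> is determined by its
  coset components \<open>restr (f \<otimes> delta (inv (s p)))\<close>, \<open>p \<in> S_n\<close>, which lie in \<open>\<int>[K]\<close>, and \<open>\<Omega>\<close> just
  lists them. For an ideal \<open>M\<close> of \<open>\<int>[K]\<close> let \<open>induced_ideal M\<close> consist of the \<open>f\<close> all of whose
  components, also after right translation, lie in \<open>M\<close>. If \<open>M\<close> is invariant under conjugation,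
  this is a two-sided ideal, \<open>\<Omega>\<close> maps it onto \<open>M \<otimes> \<int>[S_n]\<close>, and the product of two induced
  ideals is induced from the product. Everything therefore reduces to \<open>J = induced_ideal I(VP_n)\<close>.
  The inclusion holds because \<open>\<sigma>_i \<rho>_i\<^sup>-\<^sup>1 \<in> VP_n\<close>. Conversely, modulo \<open>J\<close> every letter of a word can
  be replaced by the \<open>\<rho>\<close> of the same index, and a word in the \<open>\<rho>_i\<close> with trivial permutation is
  trivial in \<open>VB_n\<close>; so \<open>h - 1 \<in> J\<close> for every \<open>h \<in> VP_n\<close>.\<close>

section \<open>Group rings\<close>

definition supp :: "('a \<Rightarrow> int) \<Rightarrow> 'a set" where
  "supp f = {x. f x \<noteq> 0}"

abbreviation delta_diff :: "'a \<Rightarrow> 'a \<Rightarrow> 'a \<Rightarrow> int" where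
  "delta_diff a b \<equiv> \<lambda>x. delta a x - delta b x"

lemma group_ring_carrier_iff:
  "f \<in> carrier (group_ring G) \<longleftrightarrow> (\<forall>x. x \<notin> carrier G \<longrightarrow> f x = 0) \<and> finite (supp f)"
  unfolding group_ring_def supp_def by simp

lemma group_ring_mult:
  "f \<otimes>\<^bsub>group_ring G\<^esub> g = (\<lambda>x. if x \<in> carrier G
     then (\<Sum>y\<in>supp f. f y * g (inv\<^bsub>G\<^esub> y \<otimes>\<^bsub>G\<^esub> x)) else 0)"
  unfolding group_ring_def supp_def by simp

lemma group_ring_add: "f \<oplus>\<^bsub>group_ring G\<^esub> g = (\<lambda>x. f x + g x)"
  by (simp add: group_ring_def)

lemma group_ring_zero: "\<zero>\<^bsub>group_ring G\<^esub> = (\<lambda>x. 0)"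
  by (simp add: group_ring_def)

lemma group_ring_one: "\<one>\<^bsub>group_ring G\<^esub> = delta \<one>\<^bsub>G\<^esub>"
  by (simp add: group_ring_def delta_def)

lemma supp_delta [simp]: "supp (delta a) = {a}"
  by (auto simp: supp_def delta_def)

lemma supp_add: "supp (\<lambda>x. f x + g x) \<subseteq> supp f \<union> supp g"
  by (auto simp: supp_def)

context group
begin

abbreviation ZG where "ZG \<equiv> group_ring G"

lemma gr_carrierD: "f \<in> carrier ZG \<Longrightarrow> x \<notin> carrier G \<Longrightarrow> f x = 0"
  by (simp add: group_ring_carrier_iff)

lemma gr_finite_supp: "f \<in> carrier ZG \<Longrightarrow> finite (supp f)"
  by (simp add: group_ring_carrier_iff)

lemma gr_supp_subset: "f \<in> carrier ZG \<Longrightarrow> supp f \<subseteq> carrier G"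
  by (auto simp: group_ring_carrier_iff supp_def)

lemma gr_mult_outside: "x \<notin> carrier G \<Longrightarrow> (f \<otimes>\<^bsub>ZG\<^esub> g) x = 0"
  by (simp add: group_ring_mult)

lemma gr_mult_apply_left:
  assumes "finite T" "supp f \<subseteq> T" "x \<in> carrier G"
  shows "(f \<otimes>\<^bsub>ZG\<^esub> g) x = (\<Sum>y\<in>T. f y * g (inv y \<otimes> x))"
proof -
  have "(f \<otimes>\<^bsub>ZG\<^esub> g) x = (\<Sum>y\<in>supp f. f y * g (inv y \<otimes> x))"
    using assms by (simp add: group_ring_mult)
  also have "\<dots> = (\<Sum>y\<in>T. f y * g (inv y \<otimes> x))"
    by (rule sum.mono_neutral_left) (use assms in \<open>auto simp: supp_def\<close>)
  finally show ?thesis .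
qed

lemma gr_mult_apply_right:
  assumes f: "f \<in> carrier ZG" and T: "finite T" "supp g \<subseteq> T" "T \<subseteq> carrier G"
    and x: "x \<in> carrier G"
  shows "(f \<otimes>\<^bsub>ZG\<^esub> g) x = (\<Sum>z\<in>T. f (x \<otimes> inv z) * g z)"
proof -
  let ?l = "\<lambda>y. inv y \<otimes> x"
  define U where "U = T \<union> ?l ` supp f"
  have fG: "supp f \<subseteq> carrier G" using gr_supp_subset[OF f] .
  have UG: "U \<subseteq> carrier G" using fG T(3) x by (auto simp: U_def)
  have finU: "finite U" using T(1) gr_finite_supp[OF f] by (simp add: U_def)
  have "(f \<otimes>\<^bsub>ZG\<^esub> g) x = (\<Sum>y\<in>supp f. f y * g (?l y))"
    using x by (simp add: group_ring_mult)
  also have "\<dots> = (\<Sum>z\<in>?l ` supp f. f (x \<otimes> inv z) * g z)"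
  proof (rule HOL.sym, rule sum.reindex_cong[where l = "\<lambda>y. inv y \<otimes> x"])
    show "inj_on ?l (supp f)"
      using fG x by (intro inj_onI) (metis inv_closed inv_inv right_cancel subsetD)
    show "f (x \<otimes> inv (?l y)) * g (?l y) = f y * g (?l y)" if "y \<in> supp f" for y
      using that fG x by (auto simp: inv_mult_group m_assoc[symmetric])
  qed simp
  also have "\<dots> = (\<Sum>z\<in>U. f (x \<otimes> inv z) * g z)"
  proof (rule sum.mono_neutral_left[OF finU])
    show "\<forall>z\<in>U - ?l ` supp f. f (x \<otimes> inv z) * g z = 0"
    proof
      fix z assume z: "z \<in> U - ?l ` supp f"
      have "z = ?l (x \<otimes> inv z)" using z UG x by (auto simp: inv_mult_group m_assoc)
      hence "x \<otimes> inv z \<notin> supp f" using z by blast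
      thus "f (x \<otimes> inv z) * g z = 0" by (simp add: supp_def)
    qed
  qed (auto simp: U_def)
  also have "\<dots> = (\<Sum>z\<in>T. f (x \<otimes> inv z) * g z)"
    by (rule sum.mono_neutral_right[OF finU]) (use T(2) in \<open>auto simp: U_def supp_def\<close>)
  finally show ?thesis .
qed

lemma supp_gr_mult:
  assumes f: "f \<in> carrier ZG"
  shows "supp (f \<otimes>\<^bsub>ZG\<^esub> g) \<subseteq> (\<lambda>(a, b). a \<otimes> b) ` (supp f \<times> supp g)"
proof
  fix x assume "x \<in> supp (f \<otimes>\<^bsub>ZG\<^esub> g)"
  hence nz: "(f \<otimes>\<^bsub>ZG\<^esub> g) x \<noteq> 0" by (simp add: supp_def)
  hence xG: "x \<in> carrier G" using gr_mult_outside by blast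
  with nz have "(\<Sum>y\<in>supp f. f y * g (inv y \<otimes> x)) \<noteq> 0" by (simp add: group_ring_mult)
  then obtain y where y: "y \<in> supp f" "f y * g (inv y \<otimes> x) \<noteq> 0"
    by (meson sum.neutral)
  have yG: "y \<in> carrier G" using y(1) gr_supp_subset[OF f] by auto
  have "inv y \<otimes> x \<in> supp g" using y(2) by (simp add: supp_def)
  moreover have "x = y \<otimes> (inv y \<otimes> x)" using xG yG by (simp add: m_assoc[symmetric])
  ultimately show "x \<in> (\<lambda>(a, b). a \<otimes> b) ` (supp f \<times> supp g)"
    using y(1) by (auto intro!: image_eqI[where x = "(y, inv y \<otimes> x)"])
qed

lemma gr_mult_closed:
  assumes "f \<in> carrier ZG" "g \<in> carrier ZG"
  shows "f \<otimes>\<^bsub>ZG\<^esub> g \<in> carrier ZG"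
proof -
  have "finite (supp (f \<otimes>\<^bsub>ZG\<^esub> g))"
    by (rule finite_subset[OF supp_gr_mult[OF assms(1)]])
       (use assms in \<open>simp add: gr_finite_supp\<close>)
  thus ?thesis by (simp add: group_ring_carrier_iff gr_mult_outside)
qed

lemma gr_add_closed: "f \<in> carrier ZG \<Longrightarrow> g \<in> carrier ZG \<Longrightarrow> (\<lambda>x. f x + g x) \<in> carrier ZG"
  unfolding group_ring_carrier_iff by (auto intro: finite_subset[OF supp_add])

lemma gr_uminus_closed: "f \<in> carrier ZG \<Longrightarrow> (\<lambda>x. - f x) \<in> carrier ZG"
  unfolding group_ring_carrier_iff by (simp add: supp_def)

lemma gr_zero_closed: "(\<lambda>x. 0) \<in> carrier ZG"
  unfolding group_ring_carrier_iff by (simp add: supp_def)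

lemma delta_closed: "a \<in> carrier G \<Longrightarrow> delta a \<in> carrier ZG"
  unfolding group_ring_carrier_iff supp_delta by (simp add: delta_def)

lemma gr_mult_assoc:
  assumes f: "f \<in> carrier ZG" and g: "g \<in> carrier ZG" and h: "h \<in> carrier ZG"
  shows "(f \<otimes>\<^bsub>ZG\<^esub> g) \<otimes>\<^bsub>ZG\<^esub> h = f \<otimes>\<^bsub>ZG\<^esub> (g \<otimes>\<^bsub>ZG\<^esub> h)"
proof
  fix x
  show "((f \<otimes>\<^bsub>ZG\<^esub> g) \<otimes>\<^bsub>ZG\<^esub> h) x = (f \<otimes>\<^bsub>ZG\<^esub> (g \<otimes>\<^bsub>ZG\<^esub> h)) x"
  proof (cases "x \<in> carrier G")
    case x: True
    have hG: "supp h \<subseteq> carrier G" and fG: "supp f \<subseteq> carrier G"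
      using gr_supp_subset f h by auto
    have fin: "finite (supp h)" using gr_finite_supp[OF h] .
    have assoc: "inv a \<otimes> (x \<otimes> inv c) = inv a \<otimes> x \<otimes> inv c" if "a \<in> supp f" "c \<in> supp h" for a c
      using that fG hG x by (simp add: m_assoc subset_iff)
    have "((f \<otimes>\<^bsub>ZG\<^esub> g) \<otimes>\<^bsub>ZG\<^esub> h) x = (\<Sum>c\<in>supp h. (f \<otimes>\<^bsub>ZG\<^esub> g) (x \<otimes> inv c) * h c)"
      using gr_mult_apply_right[OF gr_mult_closed[OF f g] fin _ hG x] by simp
    also have "\<dots> = (\<Sum>c\<in>supp h. \<Sum>a\<in>supp f. f a * g (inv a \<otimes> (x \<otimes> inv c)) * h c)"
      using hG x by (intro sum.cong) (auto simp: group_ring_mult sum_distrib_right)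
    also have "\<dots> = (\<Sum>a\<in>supp f. f a * (\<Sum>c\<in>supp h. g (inv a \<otimes> x \<otimes> inv c) * h c))"
      by (subst sum.swap) (auto simp: sum_distrib_left mult.assoc assoc intro!: sum.cong)
    also have "\<dots> = (f \<otimes>\<^bsub>ZG\<^esub> (g \<otimes>\<^bsub>ZG\<^esub> h)) x"
      using fG x gr_mult_apply_right[OF g fin _ hG]
      by (auto simp: group_ring_mult intro!: sum.cong)
    finally show ?thesis .
  qed (simp add: gr_mult_outside)
qed

lemma delta_mult_apply:
  "a \<in> carrier G \<Longrightarrow> (delta a \<otimes>\<^bsub>ZG\<^esub> f) x = (if x \<in> carrier G then f (inv a \<otimes> x) else 0)"
  by (simp add: group_ring_mult, simp add: delta_def)

lemma mult_delta_apply: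
  assumes a: "a \<in> carrier G" and f: "f \<in> carrier ZG"
  shows "(f \<otimes>\<^bsub>ZG\<^esub> delta a) x = (if x \<in> carrier G then f (x \<otimes> inv a) else 0)"
proof (cases "x \<in> carrier G")
  case True
  have "(f \<otimes>\<^bsub>ZG\<^esub> delta a) x = (\<Sum>z\<in>{a}. f (x \<otimes> inv z) * delta a z)"
    using gr_mult_apply_right[OF f, of "{a}" "delta a" x] a True by simp
  thus ?thesis using True by (simp add: delta_def)
qed (simp add: gr_mult_outside)

lemma delta_mult_delta:
  assumes "a \<in> carrier G" "b \<in> carrier G"
  shows "delta a \<otimes>\<^bsub>ZG\<^esub> delta b = delta (a \<otimes> b)"
proof
  fix x
  show "(delta a \<otimes>\<^bsub>ZG\<^esub> delta b) x = delta (a \<otimes> b) x"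
    using assms
    by (simp add: delta_mult_apply, auto simp: delta_def m_assoc[symmetric] inv_solve_left')
qed

lemma gr_one_mult: "f \<in> carrier ZG \<Longrightarrow> delta \<one> \<otimes>\<^bsub>ZG\<^esub> f = f"
  by (rule ext) (simp add: delta_mult_apply gr_carrierD)

lemma gr_mult_one: "f \<in> carrier ZG \<Longrightarrow> f \<otimes>\<^bsub>ZG\<^esub> delta \<one> = f"
  by (rule ext) (simp add: mult_delta_apply gr_carrierD)

lemma gr_add_mult:
  assumes f: "f \<in> carrier ZG" and g: "g \<in> carrier ZG"
  shows "(\<lambda>x. f x + g x) \<otimes>\<^bsub>ZG\<^esub> h = (\<lambda>x. (f \<otimes>\<^bsub>ZG\<^esub> h) x + (g \<otimes>\<^bsub>ZG\<^esub> h) x)"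
proof
  fix x
  define T where "T = supp f \<union> supp g"
  have T: "finite T" "supp f \<subseteq> T" "supp g \<subseteq> T" "supp (\<lambda>x. f x + g x) \<subseteq> T"
    using f g supp_add[of f g] by (auto simp: T_def gr_finite_supp)
  show "((\<lambda>x. f x + g x) \<otimes>\<^bsub>ZG\<^esub> h) x = (f \<otimes>\<^bsub>ZG\<^esub> h) x + (g \<otimes>\<^bsub>ZG\<^esub> h) x"
    by (cases "x \<in> carrier G")
       (simp_all add: gr_mult_apply_left[OF T(1)] T gr_mult_outside distrib_right sum.distrib)
qed

lemma gr_mult_add: "h \<otimes>\<^bsub>ZG\<^esub> (\<lambda>x. f x + g x) = (\<lambda>x. (h \<otimes>\<^bsub>ZG\<^esub> f) x + (h \<otimes>\<^bsub>ZG\<^esub> g) x)"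
  by (rule ext) (simp add: group_ring_mult distrib_left sum.distrib)

lemma ring_group_ring: "ring ZG"
proof (rule ringI)
  show "abelian_group ZG"
  proof (rule abelian_groupI)
    fix x assume x: "x \<in> carrier ZG"
    show "\<exists>y\<in>carrier ZG. y \<oplus>\<^bsub>ZG\<^esub> x = \<zero>\<^bsub>ZG\<^esub>"
      by (rule bexI[of _ "\<lambda>a. - x a"])
         (use x in \<open>simp_all add: group_ring_add group_ring_zero gr_uminus_closed\<close>)
  qed (auto simp: group_ring_add group_ring_zero gr_add_closed gr_zero_closed add.assoc add.commute)
  show "monoid ZG"
    by (rule monoidI)
       (auto simp: group_ring_one gr_mult_closed delta_closed gr_mult_assoc gr_one_mult gr_mult_one)
qed (simp_all add: group_ring_add gr_add_mult gr_mult_add)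

lemma gr_a_inv: "f \<in> carrier ZG \<Longrightarrow> \<ominus>\<^bsub>ZG\<^esub> f = (\<lambda>x. - f x)"
  using ring.is_abelian_group[OF ring_group_ring]
  by (intro abelian_group.minus_equality) (auto simp: group_ring_add group_ring_zero gr_uminus_closed)

lemma gr_int_mult: "f \<in> carrier ZG \<Longrightarrow> (\<lambda>x. c * delta \<one> x) \<otimes>\<^bsub>ZG\<^esub> f = (\<lambda>x. c * f x)"
  by (rule ext) (auto simp: group_ring_mult supp_def delta_def gr_carrierD)

lemma gr_diff_closed: "f \<in> carrier ZG \<Longrightarrow> g \<in> carrier ZG \<Longrightarrow> (\<lambda>x. f x - g x) \<in> carrier ZG"
  using gr_add_closed[OF _ gr_uminus_closed] by simp

lemma gr_sum_closed:
  "finite I \<Longrightarrow> (\<And>i. i \<in> I \<Longrightarrow> F i \<in> carrier ZG) \<Longrightarrow> (\<lambda>x. \<Sum>i\<in>I. F i x) \<in> carrier ZG"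
  by (induction I rule: finite_induct) (simp_all add: gr_zero_closed gr_add_closed)

lemma gr_mult_sum:
  "f \<otimes>\<^bsub>ZG\<^esub> (\<lambda>y. \<Sum>i\<in>I. F i y) = (\<lambda>y. \<Sum>i\<in>I. (f \<otimes>\<^bsub>ZG\<^esub> F i) y)"
  by (rule ext) (auto simp: group_ring_mult sum_distrib_left intro: sum.swap)

lemma gr_mult_int_mult:
  "f \<otimes>\<^bsub>ZG\<^esub> (\<lambda>y. c * F y) = (\<lambda>y. c * (f \<otimes>\<^bsub>ZG\<^esub> F) y)"
  by (rule ext) (auto simp: group_ring_mult sum_distrib_left mult.left_commute)

lemma gr_sum_mult:
  assumes "finite I" and "\<And>i. i \<in> I \<Longrightarrow> F i \<in> carrier ZG"
  shows "(\<lambda>x. \<Sum>i\<in>I. F i x) \<otimes>\<^bsub>ZG\<^esub> g = (\<lambda>x. \<Sum>i\<in>I. (F i \<otimes>\<^bsub>ZG\<^esub> g) x)"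
  using assms
proof (induction I rule: finite_induct)
  case empty
  show ?case by (rule ext) (simp add: group_ring_mult supp_def)
next
  case (insert a I)
  thus ?case by (simp add: gr_add_mult gr_sum_closed)
qed

lemma gr_uminus_mult: "(\<lambda>x. - f x) \<otimes>\<^bsub>ZG\<^esub> g = (\<lambda>x. - (f \<otimes>\<^bsub>ZG\<^esub> g) x)"
  by (rule ext) (simp add: group_ring_mult supp_def sum_negf)

lemma gr_zero_mult: "(\<lambda>x. 0) \<otimes>\<^bsub>ZG\<^esub> g = (\<lambda>x. 0)"
  by (rule ext) (simp add: group_ring_mult supp_def)

lemma gr_expansion: "f \<in> carrier ZG \<Longrightarrow> f = (\<lambda>y. \<Sum>x\<in>supp f. f x * delta x y)"
proof
  fix y assume f: "f \<in> carrier ZG"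
  have "(\<Sum>x\<in>supp f. f x * delta x y) = (\<Sum>x\<in>supp f. if x = y then f y else 0)"
    by (rule sum.cong) (auto simp: delta_def)
  also have "\<dots> = f y" using gr_finite_supp[OF f] by (simp add: sum.delta' supp_def)
  finally show "f y = (\<Sum>x\<in>supp f. f x * delta x y)" by simp
qed

lemma gr_mult_expansion_right:
  "r \<in> carrier ZG \<Longrightarrow> f \<otimes>\<^bsub>ZG\<^esub> r = (\<lambda>y. \<Sum>x\<in>supp r. r x * (f \<otimes>\<^bsub>ZG\<^esub> delta x) y)"
  by (subst gr_expansion) (simp_all add: gr_mult_sum gr_mult_int_mult)

lemma gr_mult_expansion_left:
  assumes r: "r \<in> carrier ZG"
  shows "r \<otimes>\<^bsub>ZG\<^esub> f = (\<lambda>y. \<Sum>x\<in>supp r. r x * (delta x \<otimes>\<^bsub>ZG\<^esub> f) y)"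
proof
  fix y
  have "x \<in> carrier G" if "x \<in> supp r" for x using that gr_supp_subset[OF r] by auto
  thus "(r \<otimes>\<^bsub>ZG\<^esub> f) y = (\<Sum>x\<in>supp r. r x * (delta x \<otimes>\<^bsub>ZG\<^esub> f) y)"
    by (cases "y \<in> carrier G")
       (auto simp: gr_mult_outside delta_mult_apply intro!: sum.cong, simp add: group_ring_mult)
qed

lemma delta_diff_closed: "a \<in> carrier G \<Longrightarrow> b \<in> carrier G \<Longrightarrow> delta_diff a b \<in> carrier ZG"
  by (simp add: gr_diff_closed delta_closed)

lemma delta_diff_mult_delta:
  assumes "a \<in> carrier G" "b \<in> carrier G" "g \<in> carrier G"
  shows "delta_diff a b \<otimes>\<^bsub>ZG\<^esub> delta g = delta_diff (a \<otimes> g) (b \<otimes> g)"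
proof
  fix x
  show "(delta_diff a b \<otimes>\<^bsub>ZG\<^esub> delta g) x = delta_diff (a \<otimes> g) (b \<otimes> g) x"
    using assms
    by (simp add: mult_delta_apply delta_diff_closed, auto simp: delta_def inv_solve_right')
qed

lemma delta_mult_delta_diff:
  assumes "a \<in> carrier G" "b \<in> carrier G" "g \<in> carrier G"
  shows "delta g \<otimes>\<^bsub>ZG\<^esub> delta_diff a b = delta_diff (g \<otimes> a) (g \<otimes> b)"
proof
  fix x
  show "(delta g \<otimes>\<^bsub>ZG\<^esub> delta_diff a b) x = delta_diff (g \<otimes> a) (g \<otimes> b) x"
    using assms
    by (simp add: delta_mult_apply, auto simp: delta_def inv_solve_left')
qed

lemma gr_ideal_add: "ideal I ZG \<Longrightarrow> f \<in> I \<Longrightarrow> g \<in> I \<Longrightarrow> (\<lambda>x. f x + g x) \<in> I"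
  using additive_subgroup.a_closed[OF ideal.axioms(1)] by (fastforce simp: group_ring_add)

lemma gr_ideal_zero: "ideal I ZG \<Longrightarrow> (\<lambda>x. 0) \<in> I"
  using additive_subgroup.zero_closed[OF ideal.axioms(1)] by (fastforce simp: group_ring_zero)

lemma gr_ideal_uminus: "ideal I ZG \<Longrightarrow> f \<in> I \<Longrightarrow> (\<lambda>x. - f x) \<in> I"
  using additive_subgroup.a_inv_closed[OF ideal.axioms(1)] gr_a_inv ideal.Icarr by fastforce

lemma gr_ideal_diff: "ideal I ZG \<Longrightarrow> f \<in> I \<Longrightarrow> g \<in> I \<Longrightarrow> (\<lambda>x. f x - g x) \<in> I"
  using gr_ideal_add[of I f "\<lambda>x. - g x"] gr_ideal_uminus[of I g] by simp

lemma gr_ideal_int_mult: "ideal I ZG \<Longrightarrow> f \<in> I \<Longrightarrow> (\<lambda>x. c * f x) \<in> I"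
proof -
  assume I: "ideal I ZG" and f: "f \<in> I"
  have "(\<lambda>x. c * delta \<one> x) \<in> carrier ZG"
    unfolding group_ring_carrier_iff by (simp add: supp_def delta_def)
  hence "(\<lambda>x. c * delta \<one> x) \<otimes>\<^bsub>ZG\<^esub> f \<in> I" using I f by (simp add: ideal.I_l_closed)
  thus ?thesis using gr_int_mult[OF ideal.Icarr[OF I f]] by simp
qed

lemma gr_ideal_sum:
  assumes I: "ideal I ZG" and "finite X" and "\<And>i. i \<in> X \<Longrightarrow> F i \<in> I"
  shows "(\<lambda>x. \<Sum>i\<in>X. F i x) \<in> I"
  using assms(2,3)
  by (induction X rule: finite_induct) (simp_all add: gr_ideal_zero[OF I] gr_ideal_add[OF I])

lemma gr_ideal_int_combination:
  "ideal I ZG \<Longrightarrow> finite X \<Longrightarrow> (\<And>i. i \<in> X \<Longrightarrow> F i \<in> I) \<Longrightarrow> (\<lambda>y. \<Sum>i\<in>X. c i * F i y) \<in> I"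
  using gr_ideal_sum[of I X "\<lambda>i y. c i * F i y"] gr_ideal_int_mult by simp

lemma gr_idealI:
  assumes "I \<subseteq> carrier ZG" and "(\<lambda>x. 0) \<in> I"
    and "\<And>f g. f \<in> I \<Longrightarrow> g \<in> I \<Longrightarrow> (\<lambda>x. f x + g x) \<in> I"
    and "\<And>f. f \<in> I \<Longrightarrow> (\<lambda>x. - f x) \<in> I"
    and "\<And>f r. f \<in> I \<Longrightarrow> r \<in> carrier ZG \<Longrightarrow> r \<otimes>\<^bsub>ZG\<^esub> f \<in> I"
    and "\<And>f r. f \<in> I \<Longrightarrow> r \<in> carrier ZG \<Longrightarrow> f \<otimes>\<^bsub>ZG\<^esub> r \<in> I"
  shows "ideal I ZG"
proof (rule idealI[OF ring_group_ring])
  show "subgroup I (add_monoid ZG)"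
  proof (rule subgroup.intro)
    show "\<And>x. x \<in> I \<Longrightarrow> inv\<^bsub>add_monoid ZG\<^esub> x \<in> I"
      using assms(1,4) gr_a_inv by (metis a_inv_def subsetD)
  qed (use assms in \<open>auto simp: group_ring_add group_ring_zero\<close>)
qed (use assms in auto)

lemma delta_diff_ideal_mult:
  assumes J: "ideal J ZG" and G: "a \<in> carrier G" "a' \<in> carrier G" "b \<in> carrier G" "b' \<in> carrier G"
    and a: "delta_diff a a' \<in> J" and b: "delta_diff b b' \<in> J"
  shows "delta_diff (a \<otimes> b) (a' \<otimes> b') \<in> J"
proof -
  have "delta_diff (a \<otimes> b) (a \<otimes> b') \<in> J"
    using ideal.I_l_closed[OF J b delta_closed[of a]] delta_mult_delta_diff G by simp
  moreover have "delta_diff (a \<otimes> b') (a' \<otimes> b') \<in> J"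
    using ideal.I_r_closed[OF J a delta_closed[of b']] delta_diff_mult_delta G by simp
  ultimately show ?thesis using gr_ideal_add[OF J] by fastforce
qed

lemma delta_diff_ideal_inv:
  assumes J: "ideal J ZG" and G: "a \<in> carrier G" "a' \<in> carrier G" and a: "delta_diff a a' \<in> J"
  shows "delta_diff (inv a) (inv a') \<in> J"
proof -
  have "delta (inv a) \<otimes>\<^bsub>ZG\<^esub> delta_diff a a' \<otimes>\<^bsub>ZG\<^esub> delta (inv a') \<in> J"
    using G by (intro ideal.I_r_closed[OF J] ideal.I_l_closed[OF J a]) (simp_all add: delta_closed)
  hence "delta_diff (inv a') (inv a) \<in> J"
    using G by (simp add: delta_mult_delta_diff delta_diff_mult_delta m_assoc)
  thus ?thesis using gr_ideal_uminus[OF J] by fastforce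
qed

end

section \<open>Ideals induced from the kernel\<close>

lemma (in ring_hom_ring) image_ideal_prod_subset:
  assumes "ideal I R" "ideal J R" "h ` I \<subseteq> I'" "h ` J \<subseteq> J'"
  shows "h ` ideal_prod R I J \<subseteq> ideal_prod S I' J'"
proof
  fix y assume "y \<in> h ` ideal_prod R I J"
  then obtain c where c: "c \<in> ideal_prod R I J" and y: "y = h c" by blast
  from c have "h c \<in> ideal_prod S I' J'"
  proof (induction c rule: ideal_prod.induct)
    case (prod i j)
    have "h (i \<otimes> j) = h i \<otimes>\<^bsub>S\<^esub> h j"
      using ideal.Icarr[OF assms(1) prod(1)] ideal.Icarr[OF assms(2) prod(2)] by simp
    moreover have "h i \<in> I'" "h j \<in> J'" using prod assms(3,4) by auto
    ultimately show ?case by (simp add: ideal_prod.prod)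
  next
    case (sum s1 s2)
    have "h (s1 \<oplus> s2) = h s1 \<oplus>\<^bsub>S\<^esub> h s2"
      using sum(1,2) R.ideal_prod_in_carrier[OF assms(1,2)] by (auto intro: hom_add)
    thus ?case using sum(3,4) by (simp add: ideal_prod.sum)
  qed
  thus "y \<in> ideal_prod S I' J'" using y by simp
qed

context group
begin

definition gr_conj :: "'a \<Rightarrow> ('a \<Rightarrow> int) \<Rightarrow> 'a \<Rightarrow> int" where
  "gr_conj g a = delta g \<otimes>\<^bsub>ZG\<^esub> a \<otimes>\<^bsub>ZG\<^esub> delta (inv g)"

definition conj_invariant :: "('a \<Rightarrow> int) set \<Rightarrow> bool" where
  "conj_invariant M \<longleftrightarrow> (\<forall>g\<in>carrier G. gr_conj g ` M \<subseteq> M)"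

lemma conj_apply:
  assumes g: "g \<in> carrier G" and a: "a \<in> carrier ZG"
  shows "gr_conj g a x = (if x \<in> carrier G then a (inv g \<otimes> x \<otimes> g) else 0)"
  using mult_delta_apply[OF inv_closed[OF g] gr_mult_closed[OF delta_closed[OF g] a], of x] g
  by (auto simp: gr_conj_def delta_mult_apply m_assoc)

lemma conj_closed: "g \<in> carrier G \<Longrightarrow> a \<in> carrier ZG \<Longrightarrow> gr_conj g a \<in> carrier ZG"
  unfolding gr_conj_def by (simp add: gr_mult_closed delta_closed)

lemma conj_mult:
  assumes g: "g \<in> carrier G" and a: "a \<in> carrier ZG" and b: "b \<in> carrier ZG"
  shows "gr_conj g (a \<otimes>\<^bsub>ZG\<^esub> b) = gr_conj g a \<otimes>\<^bsub>ZG\<^esub> gr_conj g b"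
proof -
  have d: "delta g \<in> carrier ZG" "delta (inv g) \<in> carrier ZG"
    using g by (simp_all add: delta_closed)
  have "gr_conj g a \<otimes>\<^bsub>ZG\<^esub> gr_conj g b
      = delta g \<otimes>\<^bsub>ZG\<^esub> a \<otimes>\<^bsub>ZG\<^esub> (delta (inv g) \<otimes>\<^bsub>ZG\<^esub> delta g) \<otimes>\<^bsub>ZG\<^esub> b \<otimes>\<^bsub>ZG\<^esub> delta (inv g)"
    using a b d by (simp add: gr_conj_def gr_mult_assoc gr_mult_closed)
  also have "\<dots> = gr_conj g (a \<otimes>\<^bsub>ZG\<^esub> b)"
    using a b d g by (simp add: delta_mult_delta gr_mult_one gr_conj_def gr_mult_assoc gr_mult_closed)
  finally show ?thesis by simp
qed

lemma conj_add:
  "g \<in> carrier G \<Longrightarrow> a \<in> carrier ZG \<Longrightarrow> b \<in> carrier ZG \<Longrightarrow>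
   gr_conj g (\<lambda>x. a x + b x) = (\<lambda>x. gr_conj g a x + gr_conj g b x)"
  by (rule ext) (simp add: conj_apply gr_add_closed)

lemma conj_delta: "g \<in> carrier G \<Longrightarrow> h \<in> carrier G \<Longrightarrow> gr_conj g (delta h) = delta (g \<otimes> h \<otimes> inv g)"
  by (simp add: gr_conj_def delta_mult_delta)

lemma conj_delta_diff:
  "g \<in> carrier G \<Longrightarrow> a \<in> carrier G \<Longrightarrow> b \<in> carrier G \<Longrightarrow>
   gr_conj g (delta_diff a b) = delta_diff (g \<otimes> a \<otimes> inv g) (g \<otimes> b \<otimes> inv g)"
  by (simp add: gr_conj_def delta_mult_delta_diff delta_diff_mult_delta)

lemma delta_mult_eq_conj:
  assumes x: "x \<in> carrier G" and f: "f \<in> carrier ZG"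
  shows "delta x \<otimes>\<^bsub>ZG\<^esub> f = gr_conj x (f \<otimes>\<^bsub>ZG\<^esub> delta x)"
  using x
  by (intro ext) (simp add: delta_mult_apply conj_apply[OF x gr_mult_closed[OF f delta_closed[OF x]]]
      mult_delta_apply[OF x f] m_assoc)

end

locale hom_section = group G for G (structure) +
  fixes S :: "('c, 'd) monoid_scheme" and nu :: "'a \<Rightarrow> 'c" and s :: "'c \<Rightarrow> 'a"
  assumes S_group: "group S"
    and nu_hom: "nu \<in> hom G S"
    and section_closed: "p \<in> carrier S \<Longrightarrow> s p \<in> carrier G"
    and nu_section: "p \<in> carrier S \<Longrightarrow> nu (s p) = p"
begin

lemma nu_group_hom: "group_hom G S nu"
  by (intro group_hom.intro group_hom_axioms.intro group_axioms S_group nu_hom)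

lemma nu_closed: "x \<in> carrier G \<Longrightarrow> nu x \<in> carrier S"
  by (rule hom_in_carrier[OF nu_hom])

lemma nu_mult: "x \<in> carrier G \<Longrightarrow> y \<in> carrier G \<Longrightarrow> nu (x \<otimes> y) = nu x \<otimes>\<^bsub>S\<^esub> nu y"
  by (rule group_hom.hom_mult[OF nu_group_hom])

lemma nu_one: "nu \<one> = \<one>\<^bsub>S\<^esub>"
  by (rule group_hom.hom_one[OF nu_group_hom])

abbreviation K where "K \<equiv> kernel G S nu"
abbreviation KG where "KG \<equiv> G\<lparr>carrier := K\<rparr>"
abbreviation ZK where "ZK \<equiv> group_ring KG"

lemma mem_K_iff: "x \<in> K \<longleftrightarrow> x \<in> carrier G \<and> nu x = \<one>\<^bsub>S\<^esub>"
  by (simp add: kernel_def)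

lemma K_subset: "K \<subseteq> carrier G"
  by (auto simp: kernel_def)

lemma K_subgroup: "subgroup K G"
  by (rule group_hom.subgroup_kernel[OF nu_group_hom])

lemma KG_group: "group KG"
  by (rule subgroup_imp_group[OF K_subgroup])

lemma K_mult_closed: "x \<in> K \<Longrightarrow> y \<in> K \<Longrightarrow> x \<otimes> y \<in> K"
  by (rule subgroup.m_closed[OF K_subgroup])

lemma K_inv_closed: "x \<in> K \<Longrightarrow> inv x \<in> K"
  by (rule subgroup.m_inv_closed[OF K_subgroup])

lemma K_normal: "K \<lhd> G"
  by (rule group_hom.normal_kernel[OF nu_group_hom])

lemma K_conj_iff:
  assumes g: "g \<in> carrier G" and x: "x \<in> carrier G"
  shows "g \<otimes> x \<otimes> inv g \<in> K \<longleftrightarrow> x \<in> K"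
proof
  assume "g \<otimes> x \<otimes> inv g \<in> K"
  hence "inv g \<otimes> (g \<otimes> x \<otimes> inv g) \<otimes> inv (inv g) \<in> K"
    using K_normal g inv_closed unfolding normal_inv_iff by blast
  thus "x \<in> K" using g x by (simp add: m_assoc[symmetric]) (simp add: m_assoc)
qed (use K_normal g in \<open>simp add: normal_inv_iff\<close>)

lemma mult_inv_in_K_iff:
  assumes "y \<in> carrier G" "r \<in> carrier G"
  shows "y \<otimes> inv r \<in> K \<longleftrightarrow> nu y = nu r"
proof -
  interpret group_hom G S nu by (rule nu_group_hom)
  show ?thesis using assms H.inv_solve_right' by (auto simp: mem_K_iff)
qed

lemma ZK_carrier_iff: "f \<in> carrier ZK \<longleftrightarrow> f \<in> carrier ZG \<and> supp f \<subseteq> K"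
  using K_subset by (auto simp: group_ring_carrier_iff supp_def)

lemma ZK_carrierD: "f \<in> carrier ZK \<Longrightarrow> x \<notin> K \<Longrightarrow> f x = 0"
  by (simp add: group_ring_carrier_iff)

lemma ZK_subset: "f \<in> carrier ZK \<Longrightarrow> f \<in> carrier ZG"
  using ZK_carrier_iff by blast

lemma delta_ZK: "h \<in> K \<Longrightarrow> delta h \<in> carrier ZK"
  using group.delta_closed[OF KG_group, of h] by simp

lemma ring_ZK: "ring ZK"
  by (rule group.ring_group_ring[OF KG_group])

lemma ZK_mult:
  assumes f: "f \<in> carrier ZK" and g: "g \<in> carrier ZK"
  shows "f \<otimes>\<^bsub>ZK\<^esub> g = f \<otimes>\<^bsub>ZG\<^esub> g"
proof
  fix x
  have fK: "supp f \<subseteq> K" and gK: "supp g \<subseteq> K" using f g ZK_carrier_iff by auto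
  show "(f \<otimes>\<^bsub>ZK\<^esub> g) x = (f \<otimes>\<^bsub>ZG\<^esub> g) x"
  proof (cases "x \<in> K")
    case True
    have "inv\<^bsub>KG\<^esub> y = inv y" if "y \<in> supp f" for y
      using that fK m_inv_consistent[OF K_subgroup] by auto
    thus ?thesis using True K_subset by (auto simp: group_ring_mult intro!: sum.cong)
  next
    case False
    have "x \<notin> supp (f \<otimes>\<^bsub>ZG\<^esub> g)"
      using supp_gr_mult[OF ZK_subset[OF f]] fK gK K_mult_closed False by fastforce
    thus ?thesis using False by (simp add: supp_def group_ring_mult)
  qed
qed

lemmas ZK_ideal_add = group.gr_ideal_add[OF KG_group]
lemmas ZK_ideal_zero = group.gr_ideal_zero[OF KG_group]
lemmas ZK_ideal_uminus = group.gr_ideal_uminus[OF KG_group]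
lemmas ZK_ideal_diff = group.gr_ideal_diff[OF KG_group]
lemmas ZK_ideal_int_mult = group.gr_ideal_int_mult[OF KG_group]
lemmas ZK_ideal_int_combination = group.gr_ideal_int_combination[OF KG_group]

lemma conj_ZK:
  assumes g: "g \<in> carrier G" and a: "a \<in> carrier ZK"
  shows "gr_conj g a \<in> carrier ZK"
proof -
  have aG: "a \<in> carrier ZG" using ZK_subset[OF a] .
  have "x \<in> K" if "x \<in> supp (gr_conj g a)" for x
  proof -
    have xG: "x \<in> carrier G" and "a (inv g \<otimes> x \<otimes> g) \<noteq> 0"
      using that conj_apply[OF g aG, of x] by (auto simp: supp_def split: if_splits)
    hence "inv g \<otimes> x \<otimes> g \<in> K" using ZK_carrierD[OF a] by blast
    thus "x \<in> K" using K_conj_iff[of "inv g" x] g xG by simp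
  qed
  thus ?thesis using conj_closed[OF g aG] ZK_carrier_iff by blast
qed

lemma conj_ring_hom_ring:
  assumes g: "g \<in> carrier G"
  shows "ring_hom_ring ZK ZK (gr_conj g)"
proof (rule ring_hom_ringI[OF ring_ZK ring_ZK])
  fix a b assume a: "a \<in> carrier ZK" and b: "b \<in> carrier ZK"
  show "gr_conj g (a \<otimes>\<^bsub>ZK\<^esub> b) = gr_conj g a \<otimes>\<^bsub>ZK\<^esub> gr_conj g b"
    using a b g by (simp add: ZK_mult conj_ZK conj_mult ZK_subset)
  show "gr_conj g (a \<oplus>\<^bsub>ZK\<^esub> b) = gr_conj g a \<oplus>\<^bsub>ZK\<^esub> gr_conj g b"
    using a b g by (simp add: group_ring_add conj_add ZK_subset)
qed (use g in \<open>simp_all add: conj_ZK group_ring_one conj_delta\<close>)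

definition restr :: "('a \<Rightarrow> int) \<Rightarrow> 'a \<Rightarrow> int" where
  "restr f = (\<lambda>x. if x \<in> K then f x else 0)"

lemma restr_closed: "f \<in> carrier ZG \<Longrightarrow> restr f \<in> carrier ZK"
  unfolding ZK_carrier_iff group_ring_carrier_iff restr_def supp_def
  by (auto intro: finite_subset[of _ "{x. f x \<noteq> 0}"])

lemma restr_ZK: "f \<in> carrier ZK \<Longrightarrow> restr f = f"
  by (rule ext) (simp add: restr_def ZK_carrierD)

lemma restr_int_combination: "restr (\<lambda>y. \<Sum>x\<in>X. c x * F x y) = (\<lambda>y. \<Sum>x\<in>X. c x * restr (F x) y)"
  by (rule ext) (simp add: restr_def)

lemma restr_add: "restr (\<lambda>y. f y + g y) = (\<lambda>y. restr f y + restr g y)"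
  by (rule ext) (simp add: restr_def)

lemma restr_uminus: "restr (\<lambda>y. - f y) = (\<lambda>y. - restr f y)"
  by (rule ext) (simp add: restr_def)

lemma restr_zero: "restr (\<lambda>y. 0) = (\<lambda>y. 0)"
  by (rule ext) (simp add: restr_def)

lemma restr_mult_left:
  assumes a: "a \<in> carrier ZK" and f: "f \<in> carrier ZG"
  shows "restr (a \<otimes>\<^bsub>ZG\<^esub> f) = a \<otimes>\<^bsub>ZK\<^esub> restr f"
proof
  fix x
  have aK: "supp a \<subseteq> K" using a ZK_carrier_iff by blast
  show "restr (a \<otimes>\<^bsub>ZG\<^esub> f) x = (a \<otimes>\<^bsub>ZK\<^esub> restr f) x"
  proof (cases "x \<in> K")
    case True
    have "(a \<otimes>\<^bsub>ZK\<^esub> restr f) x = (\<Sum>y\<in>supp a. a y * restr f (inv\<^bsub>KG\<^esub> y \<otimes> x))"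
      using True by (simp add: group_ring_mult)
    also have "\<dots> = (\<Sum>y\<in>supp a. a y * f (inv y \<otimes> x))"
    proof (rule sum.cong[OF HOL.refl])
      fix y assume "y \<in> supp a"
      hence y: "y \<in> K" using aK by auto
      hence "inv y \<otimes> x \<in> K" using K_mult_closed K_inv_closed True by blast
      thus "a y * restr f (inv\<^bsub>KG\<^esub> y \<otimes> x) = a y * f (inv y \<otimes> x)"
        using m_inv_consistent[OF K_subgroup y] by (simp add: restr_def)
    qed
    also have "\<dots> = (a \<otimes>\<^bsub>ZG\<^esub> f) x" using True K_subset by (auto simp: group_ring_mult)
    finally show ?thesis using True by (simp add: restr_def)
  qed (simp add: restr_def group_ring_mult)
qed

lemma restr_mult_delta:
  assumes k: "k \<in> K" and f: "f \<in> carrier ZG"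
  shows "restr (f \<otimes>\<^bsub>ZG\<^esub> delta k) = restr f \<otimes>\<^bsub>ZK\<^esub> delta k"
proof
  fix x
  have kG: "k \<in> carrier G" using k K_subset by auto
  have "x \<otimes> inv k \<in> K \<longleftrightarrow> x \<in> K" if "x \<in> carrier G"
    using that k kG K_mult_closed K_inv_closed inv_solve_right' by (metis inv_closed m_closed)
  thus "restr (f \<otimes>\<^bsub>ZG\<^esub> delta k) x = (restr f \<otimes>\<^bsub>ZK\<^esub> delta k) x"
    using group.mult_delta_apply[OF KG_group _ restr_closed[OF f], of k x] k K_subset
      mult_delta_apply[OF kG f, of x] m_inv_consistent[OF K_subgroup k]
    by (auto simp: restr_def)
qed

lemma restr_conj:
  assumes g: "g \<in> carrier G" and f: "f \<in> carrier ZG"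
  shows "restr (gr_conj g f) = gr_conj g (restr f)"
proof
  fix x
  have rf: "restr f \<in> carrier ZG" using ZK_subset[OF restr_closed[OF f]] .
  have "inv g \<otimes> x \<otimes> g \<in> K \<longleftrightarrow> x \<in> K" if "x \<in> carrier G"
    using K_conj_iff[of "inv g" x] g that by simp
  thus "restr (gr_conj g f) x = gr_conj g (restr f) x"
    unfolding conj_apply[OF g rf] using K_subset
    by (cases "x \<in> carrier G") (auto simp: restr_def conj_apply[OF g f])
qed

lemma inclusion_ring_hom_ring: "ring_hom_ring ZK ZG id"
  by (rule ring_hom_ringI[OF ring_ZK ring_group_ring])
     (simp_all add: ZK_subset ZK_mult group_ring_add group_ring_one)

text \<open>\<open>restr (f \<otimes> delta g)\<close> is the component of \<open>f\<close> on the coset \<open>K \<otimes> inv g\<close>, translated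
  into \<open>K\<close>. For a conjugation-invariant ideal \<open>M\<close> of \<open>\<int>[K]\<close>, \<open>induced_ideal M\<close> is the
  extended ideal \<open>M \<cdot> \<int>[G]\<close>, but this description is easier to compute with.\<close>

definition induced_ideal :: "('a \<Rightarrow> int) set \<Rightarrow> ('a \<Rightarrow> int) set" where
  "induced_ideal M = {f \<in> carrier ZG. \<forall>g\<in>carrier G. restr (f \<otimes>\<^bsub>ZG\<^esub> delta g) \<in> M}"

lemma induced_idealD: "f \<in> induced_ideal M \<Longrightarrow> g \<in> carrier G \<Longrightarrow> restr (f \<otimes>\<^bsub>ZG\<^esub> delta g) \<in> M"
  by (simp add: induced_ideal_def)

lemma induced_ideal_subset_carrier: "induced_ideal M \<subseteq> carrier ZG"
  by (auto simp: induced_ideal_def)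

lemma induced_ideal_carrier: "induced_ideal (carrier ZK) = carrier ZG"
  by (auto simp: induced_ideal_def restr_closed gr_mult_closed delta_closed)

lemma ideal_subset_induced_ideal:
  assumes M: "ideal M ZK"
  shows "M \<subseteq> induced_ideal M"
proof
  fix m assume m: "m \<in> M"
  have mK: "m \<in> carrier ZK" using ideal.Icarr[OF M m] .
  have mG: "m \<in> carrier ZG" using ZK_subset[OF mK] .
  have "restr (m \<otimes>\<^bsub>ZG\<^esub> delta g) \<in> M" if g: "g \<in> carrier G" for g
  proof (cases "g \<in> K")
    case True
    have "restr (m \<otimes>\<^bsub>ZG\<^esub> delta g) = m \<otimes>\<^bsub>ZK\<^esub> delta g"
      using restr_mult_delta[OF True mG] restr_ZK[OF mK] by simp
    thus ?thesis using ideal.I_r_closed[OF M m delta_ZK[OF True]] by simp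
  next
    case False
    have "x \<otimes> inv g \<notin> K" if x: "x \<in> K" for x
    proof
      assume "x \<otimes> inv g \<in> K"
      hence "inv (inv x \<otimes> (x \<otimes> inv g)) \<in> K" using x K_mult_closed K_inv_closed by blast
      moreover have "inv (inv x \<otimes> (x \<otimes> inv g)) = g"
        using x g K_subset by (auto simp: m_assoc[symmetric])
      ultimately show False using False by simp
    qed
    hence "restr (m \<otimes>\<^bsub>ZG\<^esub> delta g) = (\<lambda>x. 0)"
      using K_subset ZK_carrierD[OF mK]
      by (intro ext) (auto simp: restr_def mult_delta_apply[OF g mG])
    thus ?thesis using ZK_ideal_zero[OF M] by simp
  qed
  thus "m \<in> induced_ideal M" using mG by (simp add: induced_ideal_def)
qed

lemma induced_ideal_mult_right:
  assumes M: "ideal M ZK" and f: "f \<in> induced_ideal M" and r: "r \<in> carrier ZG"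
  shows "f \<otimes>\<^bsub>ZG\<^esub> r \<in> induced_ideal M"
proof -
  have fG: "f \<in> carrier ZG" using f induced_ideal_subset_carrier by blast
  have "restr (f \<otimes>\<^bsub>ZG\<^esub> r \<otimes>\<^bsub>ZG\<^esub> delta g) \<in> M" if g: "g \<in> carrier G" for g
  proof -
    define rg where "rg = r \<otimes>\<^bsub>ZG\<^esub> delta g"
    have rg: "rg \<in> carrier ZG" using r g by (simp add: rg_def gr_mult_closed delta_closed)
    have "f \<otimes>\<^bsub>ZG\<^esub> r \<otimes>\<^bsub>ZG\<^esub> delta g = f \<otimes>\<^bsub>ZG\<^esub> rg"
      using fG r g by (simp add: rg_def gr_mult_assoc delta_closed)
    also have "\<dots> = (\<lambda>y. \<Sum>x\<in>supp rg. rg x * (f \<otimes>\<^bsub>ZG\<^esub> delta x) y)"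
      by (rule gr_mult_expansion_right[OF rg])
    finally show ?thesis
      using induced_idealD[OF f] gr_supp_subset[OF rg] gr_finite_supp[OF rg]
      by (auto simp: restr_int_combination intro!: ZK_ideal_int_combination[OF M])
  qed
  thus ?thesis using gr_mult_closed[OF fG r] by (simp add: induced_ideal_def)
qed

text \<open>Multiplying by \<open>delta x\<close> on the left is conjugation after multiplying on the right,
  which is why left ideals need \<open>M\<close> to be conjugation invariant.\<close>

lemma induced_ideal_mult_left:
  assumes M: "ideal M ZK" and inv: "conj_invariant M"
    and f: "f \<in> induced_ideal M" and r: "r \<in> carrier ZG"
  shows "r \<otimes>\<^bsub>ZG\<^esub> f \<in> induced_ideal M"
proof -
  have fG: "f \<in> carrier ZG" using f induced_ideal_subset_carrier by blast
  have "restr (r \<otimes>\<^bsub>ZG\<^esub> f \<otimes>\<^bsub>ZG\<^esub> delta g) \<in> M" if g: "g \<in> carrier G" for g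
  proof -
    define fg where "fg = f \<otimes>\<^bsub>ZG\<^esub> delta g"
    have fg: "fg \<in> carrier ZG" using fG g by (simp add: fg_def gr_mult_closed delta_closed)
    have "r \<otimes>\<^bsub>ZG\<^esub> f \<otimes>\<^bsub>ZG\<^esub> delta g = r \<otimes>\<^bsub>ZG\<^esub> fg"
      using fG r g by (simp add: fg_def gr_mult_assoc delta_closed)
    also have "\<dots> = (\<lambda>y. \<Sum>x\<in>supp r. r x * (delta x \<otimes>\<^bsub>ZG\<^esub> fg) y)"
      by (rule gr_mult_expansion_left[OF r])
    moreover have "restr (delta x \<otimes>\<^bsub>ZG\<^esub> fg) \<in> M" if x: "x \<in> supp r" for x
    proof -
      have xG: "x \<in> carrier G" using x gr_supp_subset[OF r] by auto
      have "fg \<otimes>\<^bsub>ZG\<^esub> delta x = f \<otimes>\<^bsub>ZG\<^esub> delta (g \<otimes> x)"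
        using fG g xG by (simp add: fg_def gr_mult_assoc delta_closed delta_mult_delta)
      hence "restr (fg \<otimes>\<^bsub>ZG\<^esub> delta x) \<in> M" using induced_idealD[OF f] g xG by simp
      hence "gr_conj x (restr (fg \<otimes>\<^bsub>ZG\<^esub> delta x)) \<in> M" using inv xG by (auto simp: conj_invariant_def)
      thus ?thesis
        using xG fg by (simp add: delta_mult_eq_conj restr_conj gr_mult_closed delta_closed)
    qed
    ultimately show ?thesis
      using gr_finite_supp[OF r]
      by (auto simp: restr_int_combination intro!: ZK_ideal_int_combination[OF M])
  qed
  thus ?thesis using gr_mult_closed[OF r fG] by (simp add: induced_ideal_def)
qed

lemma induced_ideal_is_ideal:
  assumes M: "ideal M ZK" and inv: "conj_invariant M"
  shows "ideal (induced_ideal M) ZG"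
proof (rule gr_idealI[OF induced_ideal_subset_carrier])
  show "(\<lambda>x. 0) \<in> induced_ideal M"
    using ZK_ideal_zero[OF M] by (simp add: induced_ideal_def gr_zero_mult restr_zero gr_zero_closed)
  show "(\<lambda>x. f x + g x) \<in> induced_ideal M" if "f \<in> induced_ideal M" "g \<in> induced_ideal M" for f g
    using that ZK_ideal_add[OF M]
    by (auto simp: induced_ideal_def gr_add_mult delta_closed restr_add gr_add_closed)
  show "(\<lambda>x. - f x) \<in> induced_ideal M" if "f \<in> induced_ideal M" for f
    using that ZK_ideal_uminus[OF M]
    by (auto simp: induced_ideal_def gr_uminus_mult restr_uminus gr_uminus_closed)
qed (simp_all add: induced_ideal_mult_left[OF M inv] induced_ideal_mult_right[OF M])

definition coset_reps :: "('a \<Rightarrow> int) \<Rightarrow> 'a set" where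
  "coset_reps f = (\<lambda>z. s (nu z)) ` supp f"

lemma finite_coset_reps: "f \<in> carrier ZG \<Longrightarrow> finite (coset_reps f)"
  by (simp add: coset_reps_def gr_finite_supp)

lemma coset_reps_closed: "f \<in> carrier ZG \<Longrightarrow> r \<in> coset_reps f \<Longrightarrow> r \<in> carrier G"
  using gr_supp_subset section_closed nu_closed by (auto simp: coset_reps_def)

lemma coset_component_apply:
  assumes f: "f \<in> carrier ZG" and r: "r \<in> carrier G"
  shows "(restr (f \<otimes>\<^bsub>ZG\<^esub> delta (inv r)) \<otimes>\<^bsub>ZG\<^esub> delta r) y =
    (if y \<in> carrier G \<and> nu y = nu r then f y else 0)"
proof (cases "y \<in> carrier G")
  case True
  have "restr (f \<otimes>\<^bsub>ZG\<^esub> delta (inv r)) \<in> carrier ZG"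
    using ZK_subset[OF restr_closed] f r by (simp add: gr_mult_closed delta_closed)
  thus ?thesis
    using True r mult_inv_in_K_iff[OF True r]
    by (simp add: mult_delta_apply f restr_def m_assoc)
qed (simp add: gr_mult_outside)

lemma coset_decomposition:
  assumes f: "f \<in> carrier ZG"
  shows "f = (\<lambda>y. \<Sum>r\<in>coset_reps f. (restr (f \<otimes>\<^bsub>ZG\<^esub> delta (inv r)) \<otimes>\<^bsub>ZG\<^esub> delta r) y)"
proof
  fix y
  have "(\<Sum>r\<in>coset_reps f. (restr (f \<otimes>\<^bsub>ZG\<^esub> delta (inv r)) \<otimes>\<^bsub>ZG\<^esub> delta r) y)
      = (\<Sum>r\<in>coset_reps f. if f y \<noteq> 0 \<and> r = s (nu y) then f y else 0)"
  proof (rule sum.cong[OF HOL.refl])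
    fix r assume r: "r \<in> coset_reps f"
    then obtain z where z: "z \<in> carrier G" "r = s (nu z)"
      using gr_supp_subset[OF f] by (auto simp: coset_reps_def)
    have nu_r: "nu r = nu z" using z nu_section nu_closed by simp
    have "nu y = nu r \<longleftrightarrow> r = s (nu y)" if y: "y \<in> carrier G"
    proof
      assume "nu y = nu r" thus "r = s (nu y)" using z(2) nu_r by simp
    next
      assume "r = s (nu y)" thus "nu y = nu r" using nu_section[OF nu_closed[OF y]] by simp
    qed
    thus "(restr (f \<otimes>\<^bsub>ZG\<^esub> delta (inv r)) \<otimes>\<^bsub>ZG\<^esub> delta r) y = (if f y \<noteq> 0 \<and> r = s (nu y) then f y else 0)"
      using coset_component_apply[OF f coset_reps_closed[OF f r]] gr_carrierD[OF f] by auto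
  qed
  also have "\<dots> = f y"
  proof (cases "f y = 0")
    case False
    hence "s (nu y) \<in> coset_reps f" by (auto simp: coset_reps_def supp_def)
    thus ?thesis using False finite_coset_reps[OF f] by (simp add: sum.delta)
  qed simp
  finally show "f y = (\<Sum>r\<in>coset_reps f. (restr (f \<otimes>\<^bsub>ZG\<^esub> delta (inv r)) \<otimes>\<^bsub>ZG\<^esub> delta r) y)" ..
qed

lemma induced_ideal_subset:
  assumes J: "ideal J ZG" and MJ: "M \<subseteq> J"
  shows "induced_ideal M \<subseteq> J"
proof
  fix f assume f: "f \<in> induced_ideal M"
  have fG: "f \<in> carrier ZG" using f induced_ideal_subset_carrier by blast
  have "(\<lambda>y. \<Sum>r\<in>coset_reps f. (restr (f \<otimes>\<^bsub>ZG\<^esub> delta (inv r)) \<otimes>\<^bsub>ZG\<^esub> delta r) y) \<in> J"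
    using induced_idealD[OF f] coset_reps_closed[OF fG] MJ
    by (intro gr_ideal_sum[OF J finite_coset_reps[OF fG]] ideal.I_r_closed[OF J])
       (auto simp: delta_closed)
  thus "f \<in> J" using coset_decomposition[OF fG] by simp
qed

abbreviation Iaug where "Iaug \<equiv> aug_ideal KG"

lemma aug_ideal_eq: "Iaug = genideal ZK {delta_diff h \<one> | h. h \<in> K}"
  by (simp add: aug_ideal_def)

lemma aug_gens_subset: "{delta_diff h \<one> | h. h \<in> K} \<subseteq> carrier ZK"
  using group.delta_diff_closed[OF KG_group] subgroup.one_closed[OF K_subgroup] by auto

lemma aug_ideal_is_ideal: "ideal Iaug ZK"
  unfolding aug_ideal_eq by (rule ring.genideal_ideal[OF ring_ZK aug_gens_subset])

lemma aug_ideal_minimal: "ideal I ZK \<Longrightarrow> (\<And>h. h \<in> K \<Longrightarrow> delta_diff h \<one> \<in> I) \<Longrightarrow> Iaug \<subseteq> I"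
  unfolding aug_ideal_eq by (rule ring.genideal_minimal[OF ring_ZK]) auto

lemma aug_gens_mem: "h \<in> K \<Longrightarrow> delta_diff h \<one> \<in> Iaug"
  using ring.genideal_self[OF ring_ZK aug_gens_subset] unfolding aug_ideal_eq by blast

lemma conj_invariant_aug: "conj_invariant Iaug"
  unfolding conj_invariant_def
proof (intro ballI subsetI)
  fix g y assume g: "g \<in> carrier G" and "y \<in> gr_conj g ` Iaug"
  then obtain a where a: "a \<in> Iaug" and y: "y = gr_conj g a" by blast
  have "Iaug \<subseteq> {a \<in> carrier ZK. gr_conj g a \<in> Iaug}"
  proof (rule aug_ideal_minimal)
    show "ideal {a \<in> carrier ZK. gr_conj g a \<in> Iaug} ZK"
      by (rule ring_hom_ring.ideal_vimage[OF conj_ring_hom_ring[OF g] aug_ideal_is_ideal])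
    show "delta_diff h \<one> \<in> {a \<in> carrier ZK. gr_conj g a \<in> Iaug}" if h: "h \<in> K" for h
      using h g K_subset aug_gens_subset aug_gens_mem[of "g \<otimes> h \<otimes> inv g"] K_conj_iff
      by (auto simp: conj_delta_diff)
  qed
  thus "y \<in> Iaug" using a y by blast
qed

lemma conj_invariant_ideal_prod:
  assumes "ideal I ZK" "ideal M ZK" "conj_invariant I" "conj_invariant M"
  shows "conj_invariant (ideal_prod ZK I M)"
  using assms ring_hom_ring.image_ideal_prod_subset[OF conj_ring_hom_ring]
  by (simp add: conj_invariant_def)

lemma delta_diff_induced_aug:
  assumes a: "a \<in> carrier G" and b: "b \<in> carrier G" and ab: "a \<otimes> inv b \<in> K"
  shows "delta_diff a b \<in> induced_ideal Iaug"
proof -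
  have "restr (delta_diff a b \<otimes>\<^bsub>ZG\<^esub> delta g) \<in> Iaug" if g: "g \<in> carrier G" for g
  proof -
    have "nu (a \<otimes> g) = nu (b \<otimes> g)"
      using a b g ab mult_inv_in_K_iff group_hom.hom_mult[OF nu_group_hom] by simp
    hence same: "a \<otimes> g \<in> K \<longleftrightarrow> b \<otimes> g \<in> K" using a b g by (simp add: mem_K_iff)
    have eq: "restr (delta_diff a b \<otimes>\<^bsub>ZG\<^esub> delta g) = restr (delta_diff (a \<otimes> g) (b \<otimes> g))"
      using a b g by (simp add: delta_diff_mult_delta)
    show ?thesis
    proof (cases "b \<otimes> g \<in> K")
      case True
      have "restr (delta_diff a b \<otimes>\<^bsub>ZG\<^esub> delta g)
          = (\<lambda>x. delta_diff (a \<otimes> g) \<one> x - delta_diff (b \<otimes> g) \<one> x)"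
        unfolding eq using True same by (intro ext) (auto simp: restr_def delta_def)
      thus ?thesis
        using ZK_ideal_diff[OF aug_ideal_is_ideal aug_gens_mem aug_gens_mem] True same by simp
    next
      case False
      have "restr (delta_diff a b \<otimes>\<^bsub>ZG\<^esub> delta g) = (\<lambda>x. 0)"
        unfolding eq using False same by (intro ext) (auto simp: restr_def delta_def)
      thus ?thesis using ZK_ideal_zero[OF aug_ideal_is_ideal] by simp
    qed
  qed
  thus ?thesis using a b by (simp add: induced_ideal_def delta_diff_closed)
qed

lemma induced_aug_eq:
  assumes J: "ideal J ZG" and J_sub: "J \<subseteq> induced_ideal Iaug"
    and gens: "\<And>h. h \<in> K \<Longrightarrow> delta_diff h \<one> \<in> J"
  shows "J = induced_ideal Iaug"
proof
  have "Iaug \<subseteq> {a \<in> carrier ZK. id a \<in> J}"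
  proof (rule aug_ideal_minimal)
    show "ideal {a \<in> carrier ZK. id a \<in> J} ZK"
      by (rule ring_hom_ring.ideal_vimage[OF inclusion_ring_hom_ring J])
  qed (use gens aug_gens_subset in auto)
  thus "induced_ideal Iaug \<subseteq> J" by (intro induced_ideal_subset[OF J]) auto
qed (rule J_sub)

lemma mult_mem_induced_ideal_prod:
  assumes I: "ideal I ZK" and a: "a \<in> I" and z: "z \<in> induced_ideal M"
  shows "a \<otimes>\<^bsub>ZG\<^esub> z \<in> induced_ideal (ideal_prod ZK I M)"
proof -
  have aK: "a \<in> carrier ZK" using ideal.Icarr[OF I a] .
  have zG: "z \<in> carrier ZG" using z induced_ideal_subset_carrier by blast
  have "restr (a \<otimes>\<^bsub>ZG\<^esub> z \<otimes>\<^bsub>ZG\<^esub> delta g) = a \<otimes>\<^bsub>ZK\<^esub> restr (z \<otimes>\<^bsub>ZG\<^esub> delta g)" if g: "g \<in> carrier G" for g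
    using ZK_subset[OF aK] zG g restr_mult_left[OF aK]
    by (simp add: gr_mult_assoc gr_mult_closed delta_closed)
  thus ?thesis
    using ideal_prod.prod[where R = ZK, OF a induced_idealD[OF z]]
      gr_mult_closed[OF ZK_subset[OF aK] zG]
    by (simp add: induced_ideal_def)
qed

lemma induced_ideal_prod:
  assumes I: "ideal I ZK" and M: "ideal M ZK"
    and inv_I: "conj_invariant I" and inv_M: "conj_invariant M"
  shows "ideal_prod ZG (induced_ideal I) (induced_ideal M) = induced_ideal (ideal_prod ZK I M)"
proof
  have EI: "ideal (induced_ideal I) ZG" and EM: "ideal (induced_ideal M) ZG"
    using induced_ideal_is_ideal I M inv_I inv_M by auto
  have EIM: "ideal (induced_ideal (ideal_prod ZK I M)) ZG"
    using induced_ideal_is_ideal ring.ideal_prod_is_ideal[OF ring_ZK I M]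
      conj_invariant_ideal_prod[OF I M inv_I inv_M] by blast
  show "ideal_prod ZG (induced_ideal I) (induced_ideal M) \<subseteq> induced_ideal (ideal_prod ZK I M)"
  proof
    fix c assume "c \<in> ideal_prod ZG (induced_ideal I) (induced_ideal M)"
    thus "c \<in> induced_ideal (ideal_prod ZK I M)"
    proof (induction c rule: ideal_prod.induct)
      case (prod x y)
      have xG: "x \<in> carrier ZG" and yG: "y \<in> carrier ZG"
        using prod induced_ideal_subset_carrier by auto
      have rG: "r \<in> carrier G" if "r \<in> coset_reps x" for r using coset_reps_closed[OF xG that] .
      let ?a = "\<lambda>r. restr (x \<otimes>\<^bsub>ZG\<^esub> delta (inv r))"
      have aG: "?a r \<in> carrier ZG" if "r \<in> coset_reps x" for r
        using rG[OF that] xG by (simp add: ZK_subset restr_closed gr_mult_closed delta_closed)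
      have "x \<otimes>\<^bsub>ZG\<^esub> y = (\<lambda>z. \<Sum>r\<in>coset_reps x. (?a r \<otimes>\<^bsub>ZG\<^esub> delta r \<otimes>\<^bsub>ZG\<^esub> y) z)"
        using gr_sum_mult[OF finite_coset_reps[OF xG], of "\<lambda>r. ?a r \<otimes>\<^bsub>ZG\<^esub> delta r" y]
          coset_decomposition[OF xG] aG rG by (simp add: gr_mult_closed delta_closed)
      also have "\<dots> = (\<lambda>z. \<Sum>r\<in>coset_reps x. (?a r \<otimes>\<^bsub>ZG\<^esub> (delta r \<otimes>\<^bsub>ZG\<^esub> y)) z)"
        using aG rG yG by (simp add: gr_mult_assoc delta_closed)
      also have "\<dots> \<in> induced_ideal (ideal_prod ZK I M)"
        using rG induced_idealD[OF prod(1)] ideal.I_l_closed[OF EM prod(2)]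
        by (intro gr_ideal_sum[OF EIM finite_coset_reps[OF xG]] mult_mem_induced_ideal_prod[OF I])
           (auto simp: delta_closed)
      finally show ?case .
    next
      case (sum s1 s2)
      thus ?case using gr_ideal_add[OF EIM] by (simp add: group_ring_add)
    qed
  qed
  have "ideal_prod ZK I M \<subseteq> ideal_prod ZG (induced_ideal I) (induced_ideal M)"
    using ring_hom_ring.image_ideal_prod_subset[OF inclusion_ring_hom_ring I M]
      ideal_subset_induced_ideal[OF I] ideal_subset_induced_ideal[OF M] by simp
  thus "induced_ideal (ideal_prod ZK I M) \<subseteq> ideal_prod ZG (induced_ideal I) (induced_ideal M)"
    by (rule induced_ideal_subset[OF ring.ideal_prod_is_ideal[OF ring_group_ring EI EM]])
qed

lemma ideal_pow_aug_conj_invariant: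
  "ideal (ideal_pow ZK Iaug d) ZK \<and> conj_invariant (ideal_pow ZK Iaug d)"
proof (induction d)
  case 0
  show ?case using ring.oneideal[OF ring_ZK] conj_ZK by (auto simp: conj_invariant_def)
next
  case (Suc d)
  thus ?case
    using ring.ideal_prod_is_ideal[OF ring_ZK aug_ideal_is_ideal]
      conj_invariant_ideal_prod[OF aug_ideal_is_ideal _ conj_invariant_aug] by simp
qed

lemma induced_aug_pow: "ideal_pow ZG (induced_ideal Iaug) d = induced_ideal (ideal_pow ZK Iaug d)"
proof (induction d)
  case 0
  show ?case by (simp add: induced_ideal_carrier)
next
  case (Suc d)
  thus ?case
    using induced_ideal_prod[OF aug_ideal_is_ideal _ conj_invariant_aug] ideal_pow_aug_conj_invariant
    by simp
qed

end

section \<open>The coordinate map\<close>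

context hom_section
begin

definition coords :: "'a \<Rightarrow> 'a \<times> 'c" where
  "coords v = (v \<otimes> inv (s (nu v)), nu v)"

definition omega :: "('a \<Rightarrow> int) \<Rightarrow> ('a \<times> 'c \<Rightarrow> int)" where
  "omega f = (\<lambda>x. \<Sum>v\<in>{v \<in> carrier G. f v \<noteq> 0 \<and> coords v = x}. f v)"

definition tensor_space :: "('a \<times> 'c \<Rightarrow> int) set" where
  "tensor_space = {F. (\<forall>x. x \<notin> K \<times> carrier S \<longrightarrow> F x = 0) \<and> finite {x. F x \<noteq> 0}}"

definition uncoords :: "'a \<times> 'c \<Rightarrow> 'a" where
  "uncoords x = fst x \<otimes> s (snd x)"

definition omega_inv :: "('a \<times> 'c \<Rightarrow> int) \<Rightarrow> ('a \<Rightarrow> int)" where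
  "omega_inv F = (\<lambda>v. if v \<in> carrier G then F (coords v) else 0)"

definition slicewise :: "('a \<Rightarrow> int) set \<Rightarrow> ('a \<times> 'c \<Rightarrow> int) set" where
  "slicewise M = {F \<in> tensor_space. \<forall>p\<in>carrier S. (\<lambda>h. F (h, p)) \<in> M}"

lemma coords_closed: "v \<in> carrier G \<Longrightarrow> coords v \<in> K \<times> carrier S"
proof -
  assume v: "v \<in> carrier G"
  have p: "nu v \<in> carrier S" using nu_closed[OF v] .
  have "v \<otimes> inv (s (nu v)) \<in> K"
    using mult_inv_in_K_iff[OF v section_closed[OF p]] nu_section[OF p] by simp
  thus ?thesis using p by (simp add: coords_def)
qed

lemma uncoords_closed: "x \<in> K \<times> carrier S \<Longrightarrow> uncoords x \<in> carrier G"
  using K_subset section_closed by (auto simp: uncoords_def)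

lemma coords_uncoords:
  assumes x: "x \<in> K \<times> carrier S"
  shows "coords (uncoords x) = x"
proof -
  obtain h p where hp: "x = (h, p)" "h \<in> K" "p \<in> carrier S" using x by auto
  have h: "h \<in> carrier G" "nu h = \<one>\<^bsub>S\<^esub>" using hp(2) by (simp_all add: mem_K_iff)
  have sp: "s p \<in> carrier G" using section_closed[OF hp(3)] .
  have "nu (h \<otimes> s p) = p"
    using h sp hp(3) nu_mult nu_section monoid.l_one[OF group.is_monoid[OF S_group]] by simp
  moreover have "h \<otimes> s p \<otimes> inv (s p) = h" using h sp by (simp add: m_assoc)
  ultimately show ?thesis using hp by (simp add: coords_def uncoords_def)
qed

lemma uncoords_coords: "v \<in> carrier G \<Longrightarrow> uncoords (coords v) = v"
proof -
  assume v: "v \<in> carrier G"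
  have spG: "s (nu v) \<in> carrier G" using section_closed[OF nu_closed[OF v]] .
  show ?thesis using v spG by (simp add: uncoords_def coords_def m_assoc)
qed

lemma coords_eq_iff: "v \<in> carrier G \<Longrightarrow> x \<in> K \<times> carrier S \<Longrightarrow> coords v = x \<longleftrightarrow> v = uncoords x"
  using coords_uncoords uncoords_coords by metis

lemma omega_apply:
  assumes f: "f \<in> carrier ZG"
  shows "omega f x = (if x \<in> K \<times> carrier S then f (uncoords x) else 0)"
proof (cases "x \<in> K \<times> carrier S")
  case True
  have "{v \<in> carrier G. f v \<noteq> 0 \<and> coords v = x} = (if f (uncoords x) \<noteq> 0 then {uncoords x} else {})"
    using coords_eq_iff[OF _ True] uncoords_closed[OF True] by auto
  thus ?thesis using True by (simp add: omega_def)
next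
  case False
  have e: "{v \<in> carrier G. f v \<noteq> 0 \<and> coords v = x} = {}"
  proof (rule equals0I)
    fix v assume "v \<in> {v \<in> carrier G. f v \<noteq> 0 \<and> coords v = x}"
    thus False using coords_closed False by auto
  qed
  show ?thesis using False unfolding omega_def e by simp
qed

lemma omega_closed: "f \<in> carrier ZG \<Longrightarrow> omega f \<in> tensor_space"
proof -
  assume f: "f \<in> carrier ZG"
  have "{x. omega f x \<noteq> 0} \<subseteq> coords ` supp f"
  proof
    fix x assume "x \<in> {x. omega f x \<noteq> 0}"
    hence x: "x \<in> K \<times> carrier S" "f (uncoords x) \<noteq> 0"
      by (auto simp: omega_apply[OF f] split: if_splits)
    thus "x \<in> coords ` supp f"
      using coords_uncoords[OF x(1)] by (auto simp: supp_def intro!: image_eqI[of _ _ "uncoords x"])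
  qed
  hence "finite {x. omega f x \<noteq> 0}" using finite_subset gr_finite_supp[OF f] by blast
  thus ?thesis by (simp add: tensor_space_def omega_apply[OF f])
qed

lemma omega_inv_closed: "F \<in> tensor_space \<Longrightarrow> omega_inv F \<in> carrier ZG"
proof -
  assume F: "F \<in> tensor_space"
  have "supp (omega_inv F) \<subseteq> uncoords ` {x. F x \<noteq> 0}"
  proof
    fix v assume "v \<in> supp (omega_inv F)"
    hence v: "v \<in> carrier G" "F (coords v) \<noteq> 0"
      by (auto simp: supp_def omega_inv_def split: if_splits)
    thus "v \<in> uncoords ` {x. F x \<noteq> 0}"
      using uncoords_coords[OF v(1)] by (auto intro!: image_eqI[of _ _ "coords v"])
  qed
  hence "finite (supp (omega_inv F))" using F finite_subset by (auto simp: tensor_space_def)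
  thus ?thesis by (simp add: group_ring_carrier_iff omega_inv_def)
qed

lemma omega_omega_inv: "F \<in> tensor_space \<Longrightarrow> omega (omega_inv F) = F"
proof
  fix x assume F: "F \<in> tensor_space"
  show "omega (omega_inv F) x = F x"
  proof (cases "x \<in> K \<times> carrier S")
    case True
    thus ?thesis
      using omega_apply[OF omega_inv_closed[OF F]] uncoords_closed[OF True] coords_uncoords[OF True]
      by (simp add: omega_inv_def)
  next
    case False
    have "F x = 0" using F False unfolding tensor_space_def by blast
    thus ?thesis using omega_apply[OF omega_inv_closed[OF F]] False by simp
  qed
qed

lemma omega_inv_omega: "f \<in> carrier ZG \<Longrightarrow> omega_inv (omega f) = f"
proof
  fix v assume f: "f \<in> carrier ZG"
  show "omega_inv (omega f) v = f v"
  proof (cases "v \<in> carrier G")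
    case True
    thus ?thesis
      using omega_apply[OF f] coords_closed[OF True] uncoords_coords[OF True] by (simp add: omega_inv_def)
  next
    case False thus ?thesis using gr_carrierD[OF f] by (simp add: omega_inv_def)
  qed
qed

lemma bij_betw_omega: "bij_betw omega (carrier ZG) tensor_space"
  by (rule bij_betw_byWitness[where f' = omega_inv])
     (auto simp: omega_omega_inv omega_inv_omega omega_closed omega_inv_closed)

lemma omega_slice:
  assumes f: "f \<in> carrier ZG" and p: "p \<in> carrier S"
  shows "(\<lambda>h. omega f (h, p)) = restr (f \<otimes>\<^bsub>ZG\<^esub> delta (inv (s p)))"
proof
  fix h
  have spG: "s p \<in> carrier G" using section_closed[OF p] .
  show "omega f (h, p) = restr (f \<otimes>\<^bsub>ZG\<^esub> delta (inv (s p))) h"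
  proof (cases "h \<in> K")
    case True
    have hG: "h \<in> carrier G" using True K_subset by auto
    show ?thesis using True hG p spG mult_delta_apply[OF inv_closed[OF spG] f, of h]
      by (simp add: omega_apply[OF f] restr_def uncoords_def)
  next
    case False thus ?thesis by (simp add: omega_apply[OF f] restr_def)
  qed
qed

lemma induced_idealI_section:
  assumes M: "ideal M ZK" and f: "f \<in> carrier ZG"
    and sections: "\<And>p. p \<in> carrier S \<Longrightarrow> restr (f \<otimes>\<^bsub>ZG\<^esub> delta (inv (s p))) \<in> M"
  shows "f \<in> induced_ideal M"
proof -
  have "restr (f \<otimes>\<^bsub>ZG\<^esub> delta g) \<in> M" if g: "g \<in> carrier G" for g
  proof -
    define p where "p = nu (inv g)"
    have p: "p \<in> carrier S" using g by (simp add: p_def nu_closed)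
    have sp: "s p \<in> carrier G" using section_closed[OF p] .
    define k where "k = s p \<otimes> g"
    have "nu k = nu (inv g) \<otimes>\<^bsub>S\<^esub> nu g" using g sp nu_section[OF p] by (simp add: k_def p_def nu_mult)
    also have "\<dots> = nu (inv g \<otimes> g)" by (simp only: nu_mult[OF inv_closed[OF g] g])
    finally have k: "k \<in> K" using g sp by (simp add: k_def mem_K_iff nu_one)
    have "f \<otimes>\<^bsub>ZG\<^esub> delta g = f \<otimes>\<^bsub>ZG\<^esub> delta (inv (s p)) \<otimes>\<^bsub>ZG\<^esub> delta k"
      using f g sp by (simp add: k_def gr_mult_assoc delta_closed delta_mult_delta m_assoc[symmetric])
    hence "restr (f \<otimes>\<^bsub>ZG\<^esub> delta g) = restr (f \<otimes>\<^bsub>ZG\<^esub> delta (inv (s p))) \<otimes>\<^bsub>ZK\<^esub> delta k"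
      using restr_mult_delta[OF k] f sp by (simp add: gr_mult_closed delta_closed)
    thus ?thesis using ideal.I_r_closed[OF M sections[OF p] delta_ZK[OF k]] by simp
  qed
  thus ?thesis using f by (simp add: induced_ideal_def)
qed

lemma omega_induced_ideal:
  assumes M: "ideal M ZK"
  shows "omega ` induced_ideal M = slicewise M"
proof
  show "omega ` induced_ideal M \<subseteq> slicewise M"
  proof
    fix F assume "F \<in> omega ` induced_ideal M"
    then obtain f where f: "f \<in> induced_ideal M" and F: "F = omega f" by blast
    have fG: "f \<in> carrier ZG" using f induced_ideal_subset_carrier by blast
    have "(\<lambda>h. F (h, p)) \<in> M" if p: "p \<in> carrier S" for p
      using omega_slice[OF fG p] induced_idealD[OF f inv_closed[OF section_closed[OF p]]] F by simp
    thus "F \<in> slicewise M" using omega_closed[OF fG] F by (simp add: slicewise_def)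
  qed
  show "slicewise M \<subseteq> omega ` induced_ideal M"
  proof
    fix F assume F: "F \<in> slicewise M"
    have FT: "F \<in> tensor_space" using F by (simp add: slicewise_def)
    have "omega_inv F \<in> induced_ideal M"
    proof (rule induced_idealI_section[OF M omega_inv_closed[OF FT]])
      fix p assume p: "p \<in> carrier S"
      have "(\<lambda>h. omega (omega_inv F) (h, p)) \<in> M"
        using F p omega_omega_inv[OF FT] by (simp add: slicewise_def)
      thus "restr (omega_inv F \<otimes>\<^bsub>ZG\<^esub> delta (inv (s p))) \<in> M"
        using omega_slice[OF omega_inv_closed[OF FT] p] by simp
    qed
    thus "F \<in> omega ` induced_ideal M" using omega_omega_inv[OF FT] by force
  qed
qed

lemma tensor_span_sum:
  assumes "finite P" and "\<And>p. p \<in> P \<Longrightarrow> F p \<in> tensor_span X Y"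
  shows "(\<lambda>x. \<Sum>p\<in>P. F p x) \<in> tensor_span X Y"
  using assms by (induction P rule: finite_induct) (auto intro: tensor_span.zero tensor_span.add)

lemma tensor_span_subset_slicewise:
  assumes M: "ideal M ZK"
  shows "tensor_span M (carrier (group_ring S)) \<subseteq> slicewise M"
proof
  fix F assume "F \<in> tensor_span M (carrier (group_ring S))"
  thus "F \<in> slicewise M"
  proof (induction F rule: tensor_span.induct)
    case zero
    show ?case using ZK_ideal_zero[OF M] by (simp add: slicewise_def tensor_space_def)
  next
    case (elem a b)
    have aK: "a \<in> carrier ZK" using ideal.Icarr[OF M elem(1)] .
    have "{x. tensor a b x \<noteq> 0} \<subseteq> supp a \<times> supp b"
      by (auto simp: tensor_def supp_def)
    moreover have "finite (supp a \<times> supp b)"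
      using gr_finite_supp[OF ZK_subset[OF aK]] group.gr_finite_supp[OF S_group elem(2)] by simp
    moreover have "tensor a b x = 0" if "x \<notin> K \<times> carrier S" for x
      using that ZK_carrierD[OF aK] group.gr_carrierD[OF S_group elem(2)]
      by (cases x) (auto simp: tensor_def)
    moreover have "(\<lambda>h. tensor a b (h, p)) \<in> M" for p
      using ZK_ideal_int_mult[OF M elem(1), of "b p"] by (simp add: tensor_def mult.commute)
    ultimately show ?case by (auto simp: slicewise_def tensor_space_def intro: finite_subset)
  next
    case (add f g)
    have "{x. f x + g x \<noteq> 0} \<subseteq> {x. f x \<noteq> 0} \<union> {x. g x \<noteq> 0}" by auto
    hence "finite {x. f x + g x \<noteq> 0}"
      using add(3,4) finite_subset by (auto simp: slicewise_def tensor_space_def)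
    thus ?case using add(3,4) ZK_ideal_add[OF M] by (simp add: slicewise_def tensor_space_def)
  next
    case (neg f)
    thus ?case using ZK_ideal_uminus[OF M] by (simp add: slicewise_def tensor_space_def)
  qed
qed

lemma slicewise_subset_tensor_span:
  assumes M: "ideal M ZK"
  shows "slicewise M \<subseteq> tensor_span M (carrier (group_ring S))"
proof
  fix F assume F: "F \<in> slicewise M"
  define P where "P = snd ` {x. F x \<noteq> 0}"
  have finP: "finite P" using F by (simp add: P_def slicewise_def tensor_space_def)
  have PS: "P \<subseteq> carrier S" using F by (force simp: P_def slicewise_def tensor_space_def)
  have "F = (\<lambda>x. \<Sum>p\<in>P. tensor (\<lambda>h. F (h, p)) (delta p) x)"
  proof
    fix x :: "'a \<times> 'c"
    obtain h q where x: "x = (h, q)" by (cases x)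
    have "(\<Sum>p\<in>P. tensor (\<lambda>h. F (h, p)) (delta p) x) = (\<Sum>p\<in>P. if p = q then F (h, q) else 0)"
      by (rule sum.cong) (auto simp: x tensor_def delta_def)
    also have "\<dots> = F x"
      using finP by (auto simp: x P_def intro: image_eqI[of _ _ "(h, q)"])
    finally show "F x = (\<Sum>p\<in>P. tensor (\<lambda>h. F (h, p)) (delta p) x)" by simp
  qed
  moreover have "(\<lambda>x. \<Sum>p\<in>P. tensor (\<lambda>h. F (h, p)) (delta p) x)
      \<in> tensor_span M (carrier (group_ring S))"
    using F PS group.delta_closed[OF S_group]
    by (intro tensor_span_sum[OF finP] tensor_span.elem) (auto simp: slicewise_def)
  ultimately show "F \<in> tensor_span M (carrier (group_ring S))" by simp
qed

theorem omega_ideal_pow: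
  assumes J: "ideal J ZG" and J_sub: "J \<subseteq> induced_ideal Iaug"
    and gens: "\<And>h. h \<in> K \<Longrightarrow> delta_diff h \<one> \<in> J"
  shows "bij_betw omega (carrier ZG) tensor_space \<and>
    omega ` ideal_pow ZG J d = tensor_span (ideal_pow ZK Iaug d) (carrier (group_ring S))"
proof -
  have M: "ideal (ideal_pow ZK Iaug d) ZK" using ideal_pow_aug_conj_invariant by blast
  have "J = induced_ideal Iaug" by (rule induced_aug_eq[OF J J_sub gens])
  hence "omega ` ideal_pow ZG J d = slicewise (ideal_pow ZK Iaug d)"
    using induced_aug_pow omega_induced_ideal[OF M] by simp
  also have "\<dots> = tensor_span (ideal_pow ZK Iaug d) (carrier (group_ring S))"
    using tensor_span_subset_slicewise[OF M] slicewise_subset_tensor_span[OF M]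
    by (rule antisym[rotated])
  finally show ?thesis using bij_betw_omega by simp
qed

end

section \<open>The virtual braid group\<close>

lemma vb_words_append [simp]: "u @ v \<in> vb_words n \<longleftrightarrow> u \<in> vb_words n \<and> v \<in> vb_words n"
  by (auto simp: vb_words_def)

lemma vb_words_Cons [simp]: "l # v \<in> vb_words n \<longleftrightarrow> valid_letter n l \<and> v \<in> vb_words n"
  by (auto simp: vb_words_def)

lemma vb_words_Nil [simp]: "[] \<in> vb_words n"
  by (simp add: vb_words_def)

lemma sg_vb_words: "1 \<le> i \<Longrightarrow> i < n \<Longrightarrow> sg i \<in> vb_words n"
  by (simp add: sg_def valid_letter_def)

lemma rh_vb_words: "1 \<le> i \<Longrightarrow> i < n \<Longrightarrow> rh i \<in> vb_words n"
  by (simp add: rh_def valid_letter_def)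

lemma vb_eq_words: "vb_eq n u v \<Longrightarrow> u \<in> vb_words n \<and> v \<in> vb_words n"
  by (induction rule: vb_eq.induct) (auto simp: sg_def rh_def valid_letter_def flip_def)

lemma vb_eq_append: "vb_eq n u u' \<Longrightarrow> vb_eq n v v' \<Longrightarrow> vb_eq n (u @ v) (u' @ v')"
proof -
  assume u: "vb_eq n u u'" and v: "vb_eq n v v'"
  have w: "u \<in> vb_words n" "u' \<in> vb_words n" "v \<in> vb_words n" "v' \<in> vb_words n"
    using vb_eq_words[OF u] vb_eq_words[OF v] by auto
  have "vb_eq n ([] @ u @ v) ([] @ u' @ v)" by (rule vb_eq.cong[OF u]) (use w in auto)
  moreover have "vb_eq n (u' @ v @ []) (u' @ v' @ [])" by (rule vb_eq.cong[OF v]) (use w in auto)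
  ultimately show ?thesis by (auto intro: vb_eq.trans)
qed

lemma vb_eq_append_left: "vb_eq n v v' \<Longrightarrow> u \<in> vb_words n \<Longrightarrow> vb_eq n (u @ v) (u @ v')"
  by (rule vb_eq_append[OF vb_eq.refl])

lemma vb_eq_append_right: "vb_eq n u u' \<Longrightarrow> v \<in> vb_words n \<Longrightarrow> vb_eq n (u @ v) (u' @ v)"
  by (rule vb_eq_append[OF _ vb_eq.refl])

definition word_inv :: "vword \<Rightarrow> vword" where
  "word_inv w = rev (map flip w)"

lemma word_inv_vb_words: "w \<in> vb_words n \<Longrightarrow> word_inv w \<in> vb_words n"
  by (auto simp: word_inv_def vb_words_def valid_letter_def flip_def)

lemma vb_eq_word_inv: "w \<in> vb_words n \<Longrightarrow> vb_eq n (word_inv w @ w) []"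
proof -
  have "vb_eq n (v @ word_inv v) []" if "v \<in> vb_words n" for v
    using that
  proof (induction v)
    case Nil thus ?case by (simp add: word_inv_def vb_eq.refl)
  next
    case (Cons l v)
    have l: "valid_letter n l" and v: "v \<in> vb_words n" using Cons.prems by auto
    have "vb_eq n ([l] @ (v @ word_inv v) @ [flip l]) ([l] @ [] @ [flip l])"
      by (rule vb_eq.cong[OF Cons.IH[OF v]]) (use l in \<open>auto simp: valid_letter_def flip_def\<close>)
    thus ?case using vb_eq.cancel[OF l] by (auto simp: word_inv_def intro: vb_eq.trans)
  qed
  moreover have "word_inv (word_inv w) = w" by (simp add: word_inv_def rev_map comp_def flip_def)
  ultimately show "w \<in> vb_words n \<Longrightarrow> ?thesis" using word_inv_vb_words by metis
qed

lemma vb_class_eq_iff: "u \<in> vb_words n \<Longrightarrow> vb_class n u = vb_class n v \<longleftrightarrow> vb_eq n u v"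
  by (auto simp: vb_class_def intro: vb_eq.refl vb_eq.sym vb_eq.trans)

lemma vb_class_eqI: "vb_eq n u v \<Longrightarrow> vb_class n u = vb_class n v"
  using vb_class_eq_iff vb_eq_words by blast

lemma vb_eq_rep: "w \<in> vb_words n \<Longrightarrow> vb_eq n w (vb_rep (vb_class n w))"
proof -
  assume w: "w \<in> vb_words n"
  hence "w \<in> vb_class n w" by (simp add: vb_class_def vb_eq.refl)
  hence "vb_rep (vb_class n w) \<in> vb_class n w" unfolding vb_rep_def by (rule someI)
  thus ?thesis by (simp add: vb_class_def)
qed

lemma VB_carrier: "carrier (VB n) = vb_class n ` vb_words n"
  by (simp add: VB_def)

lemma VB_mult:
  "u \<in> vb_words n \<Longrightarrow> v \<in> vb_words n \<Longrightarrow> vb_class n u \<otimes>\<^bsub>VB n\<^esub> vb_class n v = vb_class n (u @ v)"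
  by (simp add: VB_def) (rule vb_class_eqI, rule vb_eq.sym, rule vb_eq_append; rule vb_eq_rep)

lemma VB_one: "\<one>\<^bsub>VB n\<^esub> = vb_class n []"
  by (simp add: VB_def)

lemma VB_group: "group (VB n)"
proof (rule groupI)
  show "\<exists>y\<in>carrier (VB n). y \<otimes>\<^bsub>VB n\<^esub> x = \<one>\<^bsub>VB n\<^esub>" if x: "x \<in> carrier (VB n)" for x
  proof -
    obtain w where w: "w \<in> vb_words n" "x = vb_class n w" using x by (auto simp: VB_carrier)
    have "vb_class n (word_inv w) \<otimes>\<^bsub>VB n\<^esub> x = \<one>\<^bsub>VB n\<^esub>"
      using w word_inv_vb_words vb_class_eqI[OF vb_eq_word_inv] by (simp add: VB_mult VB_one)
    thus ?thesis using word_inv_vb_words[OF w(1)] by (auto simp: VB_carrier)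
  qed
qed (auto simp: VB_carrier VB_mult VB_one)

lemma VB_inv: "w \<in> vb_words n \<Longrightarrow> inv\<^bsub>VB n\<^esub> (vb_class n w) = vb_class n (word_inv w)"
  using group.inv_equality[OF VB_group] word_inv_vb_words vb_class_eqI[OF vb_eq_word_inv]
  by (simp add: VB_carrier VB_mult VB_one)

abbreviation tr :: "nat \<Rightarrow> nat \<Rightarrow> nat" where
  "tr i \<equiv> transpose i (Suc i)"

lemma nu_word_Nil [simp]: "nu_word [] = id"
  by (simp add: nu_word_def)

lemma nu_word_Cons: "nu_word (l # w) = nu_letter l \<circ> nu_word w"
  by (simp add: nu_word_def)

lemma nu_word_append: "nu_word (u @ v) = nu_word u \<circ> nu_word v"
  by (induction u) (simp_all add: nu_word_Cons comp_assoc)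

lemma nu_word_sg: "nu_word (sg i) = tr i"
  by (simp add: sg_def nu_word_Cons nu_letter_def)

lemma nu_word_rh: "nu_word (rh i) = tr i"
  by (simp add: rh_def nu_word_Cons nu_letter_def)

lemma vb_eq_nu_word: "vb_eq n u v \<Longrightarrow> nu_word u = nu_word v"
proof (induction rule: vb_eq.induct)
  case (cancel l)
  have "nu_letter l \<circ> nu_letter l = id" by (rule ext) (simp add: nu_letter_def transpose_def)
  thus ?case by (simp add: nu_word_Cons nu_letter_def flip_def)
qed (auto simp: nu_word_append nu_word_sg nu_word_rh fun_eq_iff transpose_def)

lemma nu_vb_class: "w \<in> vb_words n \<Longrightarrow> nu (vb_class n w) = nu_word w"
  unfolding nu_def using vb_eq_nu_word[OF vb_eq_rep] by metis

lemma nu_word_permutes: "w \<in> vb_words n \<Longrightarrow> nu_word w permutes {1..n}"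
proof (induction w)
  case (Cons l w)
  have "nu_letter l permutes {1..n}"
    using Cons.prems unfolding nu_letter_def by (intro permutes_swap_id) (auto simp: valid_letter_def)
  moreover have "nu_word w permutes {1..n}" using Cons by simp
  ultimately show ?case unfolding nu_word_Cons by (rule permutes_compose[rotated])
qed (simp add: permutes_id)

lemma nu_hom: "nu \<in> hom (VB n) (sym_group n)"
proof -
  have "nu X \<in> carrier (sym_group n)" if "X \<in> carrier (VB n)" for X
    using that nu_word_permutes by (auto simp: VB_carrier nu_vb_class sym_group_def)
  moreover have "nu (X \<otimes>\<^bsub>VB n\<^esub> Y) = nu X \<otimes>\<^bsub>sym_group n\<^esub> nu Y"
    if "X \<in> carrier (VB n)" "Y \<in> carrier (VB n)" for X Y
    using that by (auto simp: VB_carrier VB_mult nu_vb_class nu_word_append sym_group_def)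
  ultimately show ?thesis by (simp add: hom_def)
qed

section \<open>Words in the \<open>\<rho>_i\<close>\<close>

definition rho_word :: "nat \<Rightarrow> vword \<Rightarrow> bool" where
  "rho_word m w \<longleftrightarrow> (\<forall>l\<in>set w. \<exists>i. l = (Rh i, False) \<and> 1 \<le> i \<and> i < m)"

lemma rho_word_Nil [simp]: "rho_word m []"
  by (simp add: rho_word_def)

lemma rho_word_append [simp]: "rho_word m (u @ v) \<longleftrightarrow> rho_word m u \<and> rho_word m v"
  by (auto simp: rho_word_def)

lemma rho_word_rh: "rho_word m (rh i) \<longleftrightarrow> 1 \<le> i \<and> i < m"
  by (auto simp: rho_word_def rh_def)

lemma rho_word_vb_words: "rho_word m w \<Longrightarrow> m \<le> n \<Longrightarrow> w \<in> vb_words n"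
  by (fastforce simp: rho_word_def vb_words_def valid_letter_def)

lemma transpose_rho_word:
  assumes "1 \<le> a" "a < b" "b \<le> n"
  shows "\<exists>w. rho_word n w \<and> nu_word w = transpose a b"
  using assms
proof (induction b)
  case (Suc b)
  show ?case
  proof (cases "a = b")
    case True
    thus ?thesis using Suc.prems by (intro exI[of _ "rh a"]) (simp add: rho_word_rh nu_word_rh)
  next
    case False
    then obtain w where w: "rho_word n w" "nu_word w = transpose a b" using Suc by auto
    have "tr b \<circ> transpose a b \<circ> tr b = transpose a (Suc b)"
      using False Suc.prems by (intro ext) (simp add: transpose_def)
    hence "nu_word (rh b @ w @ rh b) = transpose a (Suc b)"
      by (simp add: nu_word_append nu_word_rh w(2) comp_assoc)
    moreover have "rho_word n (rh b @ w @ rh b)" using Suc.prems False w(1) by (simp add: rho_word_rh)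
    ultimately show ?thesis by blast
  qed
qed simp

lemma permutation_rho_word:
  assumes "p permutes {1..n}"
  shows "\<exists>w. rho_word n w \<and> nu_word w = p"
  using assms finite_atLeastAtMost
proof (induction p rule: permutes_induct)
  case id
  show ?case by (rule exI[of _ "[]"]) simp
next
  case (swap a b p)
  obtain w where w: "rho_word n w" "nu_word w = p" using swap by auto
  have "\<exists>u. rho_word n u \<and> nu_word u = transpose a b"
  proof -
    consider "a < b" | "b < a" | "a = b" by linarith
    thus ?thesis
    proof cases
      case 1 thus ?thesis using swap transpose_rho_word[of a b n] by auto
    next
      case 2
      thus ?thesis using swap transpose_rho_word[of b a n] by (simp add: transpose_commute[of a b])
    next
      case 3 thus ?thesis by (intro exI[of _ "[]"]) simp
    qed
  qed
  then obtain u where u: "rho_word n u" "nu_word u = transpose a b" by blast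
  show ?case by (rule exI[of _ "u @ w"]) (use u w in \<open>simp add: nu_word_append\<close>)
qed

lemma s_sec_section:
  assumes p: "p \<in> carrier (sym_group n)"
  shows "s_sec n p \<in> carrier (VB n) \<and> nu (s_sec n p) = p"
proof -
  let ?P = "\<lambda>w. w \<in> vb_words n \<and> (\<forall>l\<in>set w. l = (Rh (gidx (fst l)), False)) \<and> nu_word w = p"
  obtain w where "rho_word n w" "nu_word w = p"
    using permutation_rho_word p by (auto simp: sym_group_def)
  hence "?P w" by (auto simp: rho_word_def rho_word_vb_words)
  hence "?P (SOME w. ?P w)" by (rule someI)
  thus ?thesis by (simp add: s_sec_def VB_carrier nu_vb_class)
qed

lemma hom_section_VB: "hom_section (VB n) (sym_group n) nu (s_sec n)"
  using VB_group sym_group_is_group nu_hom s_sec_section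
  by (simp add: hom_section_def hom_section_axioms_def)

lemma rho_commute:
  assumes j: "1 \<le> j" "j < n"
    and v: "\<forall>l\<in>set v. \<exists>i. l = (Rh i, False) \<and> 1 \<le> i \<and> i < n \<and> (i + 2 \<le> j \<or> j + 2 \<le> i)"
  shows "vb_eq n (v @ rh j) (rh j @ v)"
  using v
proof (induction v)
  case Nil thus ?case using rh_vb_words[OF j] by (simp add: vb_eq.refl)
next
  case (Cons l v)
  obtain i where i: "l = (Rh i, False)" "1 \<le> i" "i < n" "i + 2 \<le> j \<or> j + 2 \<le> i"
    using Cons.prems by auto
  have v: "v \<in> vb_words n" using Cons.prems by (fastforce simp: vb_words_def valid_letter_def)
  have "vb_eq n (v @ rh j) (rh j @ v)" using Cons by simp
  hence "vb_eq n (rh i @ (v @ rh j)) (rh i @ (rh j @ v))"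
    by (rule vb_eq_append_left[OF _ rh_vb_words[OF i(2,3)]])
  moreover have "vb_eq n (rh i @ rh j) (rh j @ rh i)"
  proof (cases "i + 2 \<le> j")
    case True show ?thesis by (rule vb_eq.rr_comm) (use i j True in auto)
  next
    case False show ?thesis by (rule vb_eq.sym, rule vb_eq.rr_comm) (use i j False in auto)
  qed
  hence "vb_eq n ((rh i @ rh j) @ v) ((rh j @ rh i) @ v)" by (rule vb_eq_append_right[OF _ v])
  ultimately have "vb_eq n (rh i @ v @ rh j) (rh j @ rh i @ v)" by (auto intro: vb_eq.trans)
  thus ?case using i(1) by (simp add: rh_def)
qed

text \<open>\<open>rho_chain k (Suc m)\<close> is \<open>\<rho>_m \<rho>_(m-1) \<dots> \<rho>_k\<close> (empty for \<open>k = Suc m\<close>). Every word in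
  \<open>\<rho>_1, \<dots>, \<rho>_m\<close> equals \<open>u @ rho_chain k (Suc m)\<close> with \<open>u\<close> a word in \<open>\<rho>_1, \<dots>, \<rho>_(m-1)\<close>, and
  the chain is detected by the image of \<open>k\<close> under the permutation. Hence a \<open>\<rho>\<close>-word with
  trivial permutation is trivial: the \<open>\<rho>_i\<close> generate a copy of \<open>S_n\<close>.\<close>

definition rho_chain :: "nat \<Rightarrow> nat \<Rightarrow> vword" where
  "rho_chain a b = map (\<lambda>i. (Rh i, False)) (rev [a..<b])"

lemma rho_chain_split: "a \<le> b \<Longrightarrow> b \<le> c \<Longrightarrow> rho_chain a c = rho_chain b c @ rho_chain a b"
  using upt_add_eq_append[of a b "c - b"] by (simp add: rho_chain_def)

lemma rho_chain_single: "rho_chain a (Suc a) = rh a"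
  by (simp add: rho_chain_def rh_def)

lemma rho_chain_empty: "rho_chain a a = []"
  by (simp add: rho_chain_def)

lemma set_rho_chain: "l \<in> set (rho_chain a b) \<longleftrightarrow> (\<exists>i. l = (Rh i, False) \<and> a \<le> i \<and> i < b)"
  by (auto simp: rho_chain_def)

lemma rho_chain_vb_words: "1 \<le> a \<Longrightarrow> b \<le> n \<Longrightarrow> rho_chain a b \<in> vb_words n"
  by (auto simp: vb_words_def valid_letter_def set_rho_chain)

lemma nu_word_rho_chain: "k \<le> m \<Longrightarrow> nu_word (rho_chain k (Suc m)) k = Suc m"
proof (induction m)
  case (Suc m)
  show ?case
  proof (cases "k = Suc m")
    case False
    hence "rho_chain k (Suc (Suc m)) = rh (Suc m) @ rho_chain k (Suc m)"
      using Suc.prems by (simp add: rho_chain_split[of k "Suc m" "Suc (Suc m)"] rho_chain_single)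
    thus ?thesis using Suc False by (simp add: nu_word_append nu_word_rh)
  qed (simp add: rho_chain_single nu_word_rh)
qed (simp add: rho_chain_single nu_word_rh)

lemma nu_word_rho_word_fixes: "rho_word m w \<Longrightarrow> m < x \<Longrightarrow> nu_word w x = x"
proof (induction w)
  case (Cons l w)
  obtain i where i: "l = (Rh i, False)" "i < m" using Cons.prems by (auto simp: rho_word_def)
  have "nu_word w x = x" using Cons by (simp add: rho_word_def)
  moreover have "x \<noteq> i" "x \<noteq> Suc i" using i Cons.prems by auto
  ultimately show ?case using i by (simp add: nu_word_Cons nu_letter_def)
qed simp

text \<open>\<open>\<rho>_j\<close> passes through the chain as \<open>\<rho>_(j-1)\<close>: it commutes with \<open>\<rho>_m \<dots> \<rho>_(j+1)\<close>,
  braids with \<open>\<rho>_j \<rho>_(j-1)\<close>, and commutes with the rest.\<close>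

lemma rho_chain_braid:
  assumes k: "1 \<le> k" "k < j" and j: "j \<le> m" and mn: "Suc m \<le> n"
  shows "vb_eq n (rho_chain k (Suc m) @ rh j) (rh (j - 1) @ rho_chain k (Suc m))"
proof -
  define X where "X = rho_chain (Suc j) (Suc m)"
  define D where "D = rho_chain k (j - 1)"
  have j2: "2 \<le> j" using k by simp
  have sp: "rho_chain k (Suc m) = X @ rh j @ rh (j - 1) @ D"
  proof -
    have "rho_chain k (Suc m) = rho_chain (Suc j) (Suc m) @ rho_chain k (Suc j)"
      by (rule rho_chain_split) (use k j in auto)
    moreover have "rho_chain k (Suc j) = rho_chain j (Suc j) @ rho_chain k j"
      by (rule rho_chain_split) (use k in auto)
    moreover have "rho_chain k j = rho_chain (j - 1) j @ rho_chain k (j - 1)"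
      by (rule rho_chain_split) (use k in auto)
    moreover have "rho_chain (j - 1) j = rh (j - 1)" using rho_chain_single[of "j - 1"] j2 by simp
    ultimately show ?thesis by (simp add: X_def D_def rho_chain_single)
  qed
  have Xw: "X \<in> vb_words n" unfolding X_def by (rule rho_chain_vb_words) (use mn in simp_all)
  have Dw: "D \<in> vb_words n"
    unfolding D_def using rho_chain_vb_words[OF k(1), of "j - 1" n] j mn by simp
  have rj: "rh j \<in> vb_words n" "rh (j - 1) \<in> vb_words n"
    using j j2 mn by (simp_all add: rh_vb_words)
  have s1: "vb_eq n (D @ rh j) (rh j @ D)"
    by (rule rho_commute) (use j mn j2 k in \<open>auto simp: D_def set_rho_chain less_diff_conv\<close>)
  have s2: "vb_eq n (rh j @ rh (j - 1) @ rh j) (rh (j - 1) @ rh j @ rh (j - 1))"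
  proof -
    have "vb_eq n (rh (j - 1) @ rh (j - 1 + 1) @ rh (j - 1))
        (rh (j - 1 + 1) @ rh (j - 1) @ rh (j - 1 + 1))"
      by (rule vb_eq.rr_braid) (use j2 j mn in auto)
    thus ?thesis using j2 by (simp add: vb_eq.sym)
  qed
  have s3: "vb_eq n (X @ rh (j - 1)) (rh (j - 1) @ X)"
    by (rule rho_commute) (use j mn j2 in \<open>auto simp: X_def set_rho_chain\<close>)
  have "vb_eq n (X @ rh j @ rh (j - 1) @ (D @ rh j)) (X @ rh j @ rh (j - 1) @ (rh j @ D))"
    using vb_eq_append_left[OF s1, of "X @ rh j @ rh (j - 1)"] Xw rj by simp
  moreover have "vb_eq n (X @ (rh j @ rh (j - 1) @ rh j) @ D)
      (X @ (rh (j - 1) @ rh j @ rh (j - 1)) @ D)"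
    by (rule vb_eq_append_left[OF vb_eq_append_right[OF s2 Dw] Xw])
  moreover have "vb_eq n ((X @ rh (j - 1)) @ (rh j @ rh (j - 1) @ D))
      ((rh (j - 1) @ X) @ (rh j @ rh (j - 1) @ D))"
    by (rule vb_eq_append_right[OF s3]) (use rj Dw in simp)
  ultimately have "vb_eq n (X @ rh j @ rh (j - 1) @ D @ rh j)
      (rh (j - 1) @ X @ rh j @ rh (j - 1) @ D)"
    by (auto intro: vb_eq.trans)
  thus ?thesis using sp by simp
qed

lemma rho_chain_append_rh:
  assumes j: "1 \<le> j" "j \<le> m" and k: "1 \<le> k" "k \<le> Suc m" and mn: "Suc m \<le> n"
  shows "\<exists>u k'. rho_word m u \<and> 1 \<le> k' \<and> k' \<le> Suc m \<and>
    vb_eq n (rho_chain k (Suc m) @ rh j) (u @ rho_chain k' (Suc m))"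
proof -
  consider (commute) "j + 1 < k" | (extend) "j + 1 = k" | (cancel) "j = k" | (braid) "k < j"
    by linarith
  thus ?thesis
  proof cases
    case commute
    have "vb_eq n (rho_chain k (Suc m) @ rh j) (rh j @ rho_chain k (Suc m))"
      by (rule rho_commute) (use j mn commute in \<open>auto simp: set_rho_chain\<close>)
    thus ?thesis using j k commute by (intro exI[of _ "rh j"] exI[of _ k]) (simp add: rho_word_rh)
  next
    case extend
    hence "k = Suc j" by simp
    hence "rho_chain k (Suc m) @ rh j = rho_chain j (Suc m)"
      using rho_chain_split[of j k "Suc m"] k by (simp add: rho_chain_single)
    thus ?thesis using j mn rho_chain_vb_words[of j "Suc m" n]
      by (intro exI[of _ "[]"] exI[of _ j]) (simp add: vb_eq.refl)
  next
    case cancel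
    have "rho_chain k (Suc m) = rho_chain (Suc k) (Suc m) @ rh k"
      using cancel j by (simp add: rho_chain_split[of k "Suc k" "Suc m"] rho_chain_single)
    moreover have "vb_eq n (rho_chain (Suc k) (Suc m) @ (rh k @ rh k))
        (rho_chain (Suc k) (Suc m) @ [])"
      by (rule vb_eq_append_left[OF vb_eq.rr_inv rho_chain_vb_words]) (use cancel j mn in auto)
    ultimately show ?thesis using cancel j by (intro exI[of _ "[]"] exI[of _ "Suc k"]) simp
  next
    case braid
    have "vb_eq n (rho_chain k (Suc m) @ rh j) (rh (j - 1) @ rho_chain k (Suc m))"
      by (rule rho_chain_braid) (use braid k j mn in auto)
    thus ?thesis using braid k j by (intro exI[of _ "rh (j - 1)"] exI[of _ k]) (auto simp: rho_word_rh)
  qed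
qed

lemma rho_word_normal_form:
  assumes w: "rho_word (Suc m) w" and mn: "Suc m \<le> n"
  shows "\<exists>u k. rho_word m u \<and> 1 \<le> k \<and> k \<le> Suc m \<and> vb_eq n w (u @ rho_chain k (Suc m))"
  using w
proof (induction w rule: rev_induct)
  case Nil
  show ?case by (intro exI[of _ "[]"] exI[of _ "Suc m"]) (simp add: rho_chain_empty vb_eq.refl)
next
  case (snoc l w)
  obtain j where j: "l = (Rh j, False)" "1 \<le> j" "j \<le> m"
    using snoc.prems by (auto simp: rho_word_def)
  obtain u k where uk: "rho_word m u" "1 \<le> k" "k \<le> Suc m" "vb_eq n w (u @ rho_chain k (Suc m))"
    using snoc by auto
  obtain u' k' where uk': "rho_word m u'" "1 \<le> k'" "k' \<le> Suc m"
      "vb_eq n (rho_chain k (Suc m) @ rh j) (u' @ rho_chain k' (Suc m))"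
    using rho_chain_append_rh[OF j(2,3) uk(2,3) mn] by blast
  have "vb_eq n (w @ rh j) ((u @ rho_chain k (Suc m)) @ rh j)"
    by (rule vb_eq_append_right[OF uk(4) rh_vb_words]) (use j mn in auto)
  moreover have "vb_eq n (u @ (rho_chain k (Suc m) @ rh j)) (u @ (u' @ rho_chain k' (Suc m)))"
    by (rule vb_eq_append_left[OF uk'(4) rho_word_vb_words[OF uk(1)]]) (use mn in simp)
  ultimately have "vb_eq n (w @ [l]) ((u @ u') @ rho_chain k' (Suc m))"
    using j(1) by (auto simp: rh_def intro: vb_eq.trans)
  thus ?case using uk(1) uk' by (intro exI[of _ "u @ u'"] exI[of _ k']) simp
qed

lemma rho_word_trivial:
  assumes "rho_word m w" "m \<le> n" "nu_word w = id"
  shows "vb_eq n w []"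
  using assms
proof (induction m arbitrary: w)
  case 0
  hence "w = []" by (cases w) (auto simp: rho_word_def)
  thus ?case by (simp add: vb_eq.refl)
next
  case (Suc m)
  obtain u k where uk: "rho_word m u" "1 \<le> k" "k \<le> Suc m" "vb_eq n w (u @ rho_chain k (Suc m))"
    using rho_word_normal_form[OF Suc.prems(1,2)] by blast
  have nu_uk: "nu_word (u @ rho_chain k (Suc m)) = id"
    using vb_eq_nu_word[OF uk(4)] Suc.prems(3) by metis
  have "k = Suc m"
  proof (rule ccontr)
    assume k: "k \<noteq> Suc m"
    hence "nu_word (u @ rho_chain k (Suc m)) k = Suc m"
      using uk(3) nu_word_rho_chain[of k m] nu_word_rho_word_fixes[OF uk(1), of "Suc m"]
      by (simp add: nu_word_append)
    thus False using nu_uk k by simp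
  qed
  hence wu: "vb_eq n w u" using uk(4) by (simp add: rho_chain_empty)
  have "nu_word u = id" using vb_eq_nu_word[OF wu] Suc.prems(3) by metis
  hence "vb_eq n u []" using Suc.IH[OF uk(1)] Suc.prems(2) by simp
  thus ?case using vb_eq.trans[OF wu] by blast
qed

section \<open>The ideal \<open>J\<close>\<close>

interpretation VB: hom_section "VB n" "sym_group n" nu "s_sec n" for n
  by (rule hom_section_VB)

lemma VP_eq_kernel: "VP n = (VB n)\<lparr>carrier := kernel (VB n) (sym_group n) nu\<rparr>"
  by (simp add: VP_def VP_set_def kernel_def sym_group_def)

lemma Omega_eq_omega: "Omega n = VB.omega n"
  by (rule ext) (simp add: VB.omega_def Omega_def VB.coords_def phi_def)

lemma tensor_carrier_eq_tensor_space: "tensor_carrier n = VB.tensor_space n"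
  unfolding VB.tensor_space_def tensor_carrier_def by (simp add: VP_set_def kernel_def sym_group_def)

lemma sigma_closed: "1 \<le> i \<Longrightarrow> i < n \<Longrightarrow> sigma n i \<in> carrier (VB n)"
  by (auto simp: sigma_def VB_carrier sg_vb_words)

lemma rho_closed: "1 \<le> i \<Longrightarrow> i < n \<Longrightarrow> rho n i \<in> carrier (VB n)"
  by (auto simp: rho_def VB_carrier rh_vb_words)

lemma VB_inv_rho: "1 \<le> i \<Longrightarrow> i < n \<Longrightarrow> inv\<^bsub>VB n\<^esub> rho n i = rho n i"
  using group.inv_equality[OF VB_group] rho_closed vb_class_eqI[OF vb_eq.rr_inv]
  by (simp add: rho_def VB_mult VB_one rh_vb_words)

lemma J_ideal_gens_subset:
  "{delta_diff (sigma n i) (rho n i) |i. 1 \<le> i \<and> i < n} \<subseteq> carrier (group_ring (VB n))"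
  by (auto simp: VB.delta_diff_closed sigma_closed rho_closed)

lemma J_ideal_is_ideal: "ideal (J_ideal n) (group_ring (VB n))"
  unfolding J_ideal_def by (rule ring.genideal_ideal[OF VB.ring_group_ring J_ideal_gens_subset])

lemma sigma_rho_mem_J_ideal: "1 \<le> i \<Longrightarrow> i < n \<Longrightarrow> delta_diff (sigma n i) (rho n i) \<in> J_ideal n"
  unfolding J_ideal_def using ring.genideal_self[OF VB.ring_group_ring J_ideal_gens_subset] by blast

lemma J_ideal_subset_induced: "J_ideal n \<subseteq> VB.induced_ideal n (VB.Iaug n)"
  unfolding J_ideal_def
proof (rule ring.genideal_minimal[OF VB.ring_group_ring
      VB.induced_ideal_is_ideal[OF VB.aug_ideal_is_ideal VB.conj_invariant_aug]])
  have "nu (sigma n i) = nu (rho n i)" if "1 \<le> i" "i < n" for i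
    using that
    by (simp add: sigma_def rho_def nu_vb_class sg_vb_words rh_vb_words nu_word_sg nu_word_rh)
  thus "{delta_diff (sigma n i) (rho n i) |i. 1 \<le> i \<and> i < n} \<subseteq> VB.induced_ideal n (VB.Iaug n)"
    using VB.mult_inv_in_K_iff sigma_closed rho_closed
    by (auto intro!: VB.delta_diff_induced_aug)
qed

text \<open>Replacing every letter by the positive \<open>\<rho>\<close> of the same index does not change a word
  modulo \<open>J\<close>; on \<open>VP_n\<close> the result is a \<open>\<rho>\<close>-word with trivial permutation, hence trivial.\<close>

definition rho_letters :: "vword \<Rightarrow> vword" where
  "rho_letters w = map (\<lambda>l. (Rh (gidx (fst l)), False)) w"

lemma rho_word_rho_letters: "w \<in> vb_words n \<Longrightarrow> rho_word n (rho_letters w)"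
  by (auto simp: rho_letters_def rho_word_def vb_words_def valid_letter_def)

lemma nu_word_rho_letters: "nu_word (rho_letters w) = nu_word w"
  by (induction w) (simp_all add: rho_letters_def nu_word_Cons nu_letter_def)

lemma letter_delta_diff_mem_J_ideal:
  assumes l: "valid_letter n l"
  shows "delta_diff (vb_class n [l]) (rho n (gidx (fst l))) \<in> J_ideal n"
proof -
  obtain g b where gb: "l = (g, b)" by (cases l)
  define i where "i = gidx g"
  have i: "1 \<le> i" "i < n" using l gb by (simp_all add: i_def valid_letter_def)
  have g: "[(g, False)] \<in> vb_words n" using l gb by (simp add: valid_letter_def)
  have x0: "vb_class n [(g, False)] \<in> carrier (VB n)" using g by (simp add: VB_carrier)
  have J: "ideal (J_ideal n) (group_ring (VB n))" by (rule J_ideal_is_ideal)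
  have pos: "delta_diff (vb_class n [(g, False)]) (rho n i) \<in> J_ideal n"
  proof (cases g)
    case (Sg j)
    thus ?thesis using sigma_rho_mem_J_ideal[OF i] by (simp add: i_def sigma_def sg_def)
  next
    case (Rh j)
    thus ?thesis using VB.gr_ideal_zero[OF J] by (simp add: i_def rho_def rh_def)
  qed
  show ?thesis
  proof (cases b)
    case True
    have "vb_class n [l] = inv\<^bsub>VB n\<^esub> vb_class n [(g, False)]"
      using VB_inv[OF g] gb True by (simp add: word_inv_def flip_def)
    thus ?thesis
      using VB.delta_diff_ideal_inv[OF J x0 rho_closed[OF i] pos] VB_inv_rho[OF i]
      by (simp add: i_def gb)
  qed (use pos gb in \<open>simp add: i_def\<close>)
qed

lemma word_delta_diff_mem_J_ideal:
  "w \<in> vb_words n \<Longrightarrow> delta_diff (vb_class n w) (vb_class n (rho_letters w)) \<in> J_ideal n"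
proof (induction w)
  case Nil
  show ?case using VB.gr_ideal_zero[OF J_ideal_is_ideal] by (simp add: rho_letters_def)
next
  case (Cons l w)
  have l: "valid_letter n l" and w: "w \<in> vb_words n" using Cons.prems by auto
  define i where "i = gidx (fst l)"
  have i: "1 \<le> i" "i < n" using l by (simp_all add: i_def valid_letter_def)
  have rw: "rho_letters w \<in> vb_words n" using rho_word_vb_words[OF rho_word_rho_letters[OF w]] by simp
  have "vb_class n (l # w) = vb_class n [l] \<otimes>\<^bsub>VB n\<^esub> vb_class n w"
    using VB_mult[of "[l]" n w] l w by simp
  moreover have "vb_class n (rho_letters (l # w)) = rho n i \<otimes>\<^bsub>VB n\<^esub> vb_class n (rho_letters w)"
    using VB_mult[OF rh_vb_words[OF i] rw] by (simp add: rho_def rho_letters_def rh_def i_def)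
  moreover have "delta_diff (vb_class n [l] \<otimes>\<^bsub>VB n\<^esub> vb_class n w)
      (rho n i \<otimes>\<^bsub>VB n\<^esub> vb_class n (rho_letters w)) \<in> J_ideal n"
  proof (rule VB.delta_diff_ideal_mult[OF J_ideal_is_ideal])
    show "vb_class n [l] \<in> carrier (VB n)" "vb_class n w \<in> carrier (VB n)"
      "vb_class n (rho_letters w) \<in> carrier (VB n)"
      using l w rw by (auto simp: VB_carrier)
    show "rho n i \<in> carrier (VB n)" using rho_closed[OF i] .
    show "delta_diff (vb_class n [l]) (rho n i) \<in> J_ideal n"
      using letter_delta_diff_mem_J_ideal[OF l] by (simp add: i_def)
  qed (rule Cons.IH[OF w])
  ultimately show ?case by simp
qed

lemma kernel_delta_diff_mem_J_ideal:
  assumes h: "h \<in> kernel (VB n) (sym_group n) nu"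
  shows "delta_diff h \<one>\<^bsub>VB n\<^esub> \<in> J_ideal n"
proof -
  obtain w where w: "w \<in> vb_words n" "h = vb_class n w"
    using h by (auto simp: kernel_def VB_carrier)
  have "nu_word (rho_letters w) = id"
    using h w by (simp add: kernel_def nu_word_rho_letters nu_vb_class sym_group_def)
  hence "vb_eq n (rho_letters w) []" using rho_word_trivial[OF rho_word_rho_letters[OF w(1)]] by simp
  hence "vb_class n (rho_letters w) = \<one>\<^bsub>VB n\<^esub>" by (simp add: vb_class_eqI VB_one)
  thus ?thesis using word_delta_diff_mem_J_ideal[OF w(1)] w(2) by simp
qed

theorem proposition8p2:
  fixes n d :: nat
  assumes "d \<ge> 1"
  shows "bij_betw (Omega n) (carrier (group_ring (VB n))) (tensor_carrier n)
    \<and> Omega n ` ideal_pow (group_ring (VB n)) (J_ideal n) d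
        = tensor_span (ideal_pow (group_ring (VP n)) (aug_ideal (VP n)) d)
                      (carrier (group_ring (sym_group n)))"
  using VB.omega_ideal_pow[OF J_ideal_is_ideal J_ideal_subset_induced kernel_delta_diff_mem_J_ideal]
  unfolding Omega_eq_omega tensor_carrier_eq_tensor_space VP_eq_kernel .

end
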